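(* Let $\nu(\mathbb{R}^d\setminus\{0\})<\infty$ and assume (B) and (C) below hold with some $E\subset\mathbb{S}^{d-1}$ and $\kappa\ge0$. Let $t_0>0$. (a) For every $t\in(0,t_0]$, $\theta\in E$ and $y\in\mathbb{R}^d$, $$\lim_{s\to\infty}\frac{\widetilde p_t(s\theta-y)}{t\,\nu(s\theta)}=\exp\big(\kappa(\theta\cdot y)\big)\exp\Big(t\int\big(e^{\kappa(\theta\cdot z)}-1\big)\nu(z)\,dz\Big).$$ (b) If the convergence in (C) is uniform in $(\theta,y)\in E\times D$ for every compact $D\subset\mathbb{R}^d$, then the convergence in (a) is uniform in $(t,\theta,y)$ on each set $(0,t_0]\times E\times B(0,\varrho)$, $\varrho>0$.
   Context: Let $d\ge1$ and $\nu$ a Lévy measure on $\mathbb{R}^d\setminus\{0\}$ with finite total mass $|\nu|$; $\nu^{n*}$ is the density of the $n$-fold convolution of $\nu$ and $\widetilde p_t(x)=e^{-t|\nu|}\sum_{n\ge1}\frac{t^n\nu^{n*}(x)}{n!}$. $\Gamma_E=\{y\ne0:y/|y|\in E\}$. (B) $\nu(dx)=\nu(x)dx$; there are nonincreasing $f:(0,\infty)\to(0,\infty)$ and $C_0>0$ with $\nu(x)\le C_0f(|x|)$, $\liminf_{r\to0^+}\frac{\nu(\{|x|>r\})}{f(r)r^d}>0$, and $K(r):=\sup_{|x|>1}\frac{1}{f(|x|)}\int_{|x-y|>r,|y|>r}f(|x-y|)f(|y|)dy$ decreases to $0$ as $r\to\infty$. (C) $\lim_{r\to\infty}\nu(r\theta-y)/\nu(r\theta)=e^{\kappa(\theta\cdot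 y)}$ for all $y\in\mathbb{R}^d$, $\theta\in E$, and $\inf_{x\in\Gamma_E}\nu(x)/f(|x|)>0$. *)

theory Defs
  imports "HOL-Analysis.Analysis"
begin

text \<open>Densities of n-fold convolutions of the (finite) Levy density nu.
  conv_dens nu n is the density of the n-fold convolution (n >= 1);
  the value for n = 0 is an unused dummy.\<close>
fun conv_dens :: "('a::euclidean_space \<Rightarrow> real) \<Rightarrow> nat \<Rightarrow> 'a \<Rightarrow> real" where
  "conv_dens nu 0 = (\<lambda>_. 0)"
| "conv_dens nu (Suc 0) = nu"
| "conv_dens nu (Suc (Suc n)) = (\<lambda>x. LINT y|lborel. conv_dens nu (Suc n) (x - y) * nu y)"

definition total_mass :: "('a::euclidean_space \<Rightarrow> real) \<Rightarrow> real" where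
  "total_mass nu = (LINT x|lborel. nu x)"

definition ptilde :: "('a::euclidean_space \<Rightarrow> real) \<Rightarrow> real \<Rightarrow> 'a \<Rightarrow> real" where
  "ptilde nu t x = exp (- t * total_mass nu) *
     (\<Sum>n. t ^ (Suc n) * conv_dens nu (Suc n) x / fact (Suc n))"

definition K_fun :: "(real \<Rightarrow> real) \<Rightarrow> real \<Rightarrow> ennreal" where
  "K_fun f r = (SUP x\<in>{x::'a::euclidean_space. norm x > 1}.
      (\<integral>\<^sup>+ y. indicator {y. norm (x - y) > r \<and> norm y > r} y
              * ennreal (f (norm (x - y)) * f (norm y)) \<partial>lborel) / ennreal (f (norm x)))"

definition Gamma_cone :: "'a::real_normed_vector set \<Rightarrow> 'a set" where
  "Gamma_cone E = {y. y \<noteq> 0 \<and> y /\<^sub>R norm y \<in> E}"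

end

theory Submission
  imports Defs
begin

(* Everything rests on the ratio asymptotics
     nu^{*(n+1)} (s theta - y) / nu (s theta)  -->  (n+1) M(theta)^n e^(kappa theta.y),
     M(theta) = int e^(kappa theta.z) nu(z) dz,
   proved by induction on n.  For |x| > 2R the convolution nu^{*(n+2)}(x) = (nu^{*(n+1)} * nu)(x) splits
   into the part where the nu-variable lies in the ball of radius R, the part where the other variable
   does, and a remainder where both are large.  The first two parts converge by the induction hypothesis
   and by (C); the remainder is O(K(R) f(|x|)) = O(K(R) nu(s theta)) by (B) and the lower bound of nu on
   the cone, and K(R) -> 0.  The same splitting gives nu^{*(n+1)}(x) <= A B^(n+1) f(|x|) for |x| >= R1,
   a summable majorant for the series, which can therefore be summed termwise:
   e^(-t |nu|) sum_n t^n/(n+1)! (n+1) M^n = e^(t (M - |nu|)).  Under the uniform version of (C) every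
   step holds uniformly in (t, theta, y). *)

section \<open>Integrals and uniform limits\<close>

lemma lborel_distr_reflect:
  fixes t :: "'a::euclidean_space"
  shows "distr lborel borel (\<lambda>x. t - x) = lborel"
proof -
  have "lborel = density (distr lborel borel (\<lambda>x. t + (-1) *\<^sub>R x)) (\<lambda>_. \<bar>-1::real\<bar>^DIM('a))"
    by (rule lborel_affine) simp
  then show ?thesis by (simp add: density_1)
qed

lemma nn_integral_reflect_lborel:
  fixes g :: "'a::euclidean_space \<Rightarrow> ennreal"
  assumes [measurable]: "g \<in> borel_measurable borel"
  shows "(\<integral>\<^sup>+x. g (t - x) \<partial>lborel) = (\<integral>\<^sup>+x. g x \<partial>lborel)"
  by (subst (2) lborel_distr_reflect[of t, symmetric]) (simp add: nn_integral_distr)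

lemma integral_reflect_lborel:
  fixes g :: "'a::euclidean_space \<Rightarrow> real"
  assumes [measurable]: "g \<in> borel_measurable borel"
  shows "(LINT x|lborel. g (t - x)) = (LINT x|lborel. g x)"
  by (subst (2) lborel_distr_reflect[of t, symmetric]) (simp add: integral_distr)

lemma integrable_reflect_lborel:
  fixes g :: "'a::euclidean_space \<Rightarrow> real"
  assumes [measurable]: "g \<in> borel_measurable borel"
  shows "integrable lborel (\<lambda>x. g (t - x)) \<longleftrightarrow> integrable lborel g"
  by (subst (2) lborel_distr_reflect[of t, symmetric]) (simp add: integrable_distr_eq)

lemma nn_integral_shift_lborel:
  fixes g :: "'a::euclidean_space \<Rightarrow> ennreal"
  assumes [measurable]: "g \<in> borel_measurable borel"
  shows "(\<integral>\<^sup>+x. g (x - y) \<partial>lborel) = (\<integral>\<^sup>+x. g x \<partial>lborel)"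
proof -
  have "(\<integral>\<^sup>+x. g x \<partial>lborel) = (\<integral>\<^sup>+x. g x \<partial>distr lborel borel ((+) (-y)))"
    by (simp add: lborel_distr_plus)
  also have "\<dots> = (\<integral>\<^sup>+x. g (-y + x) \<partial>lborel)"
    by (rule nn_integral_distr) auto
  finally show ?thesis by simp
qed

lemma integrable_indicator_times:
  fixes f :: "'a \<Rightarrow> real"
  shows "A \<in> sets M \<Longrightarrow> integrable M f \<Longrightarrow> integrable M (\<lambda>x. indicator A x * f x)"
  using integrable_mult_indicator[of A M f] by simp

lemma indicator_cball_measurable[measurable]:
  "(\<lambda>z. indicator (cball (0::'a::euclidean_space) R) z :: real) \<in> borel_measurable borel"
  by (rule borel_measurable_indicator) simp

lemma integral_split_cball:
  fixes F :: "'a::euclidean_space \<Rightarrow> real"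
  assumes "integrable lborel F"
  shows "(LINT w|lborel. F w) =
    (LINT w|lborel. indicator (cball 0 R) w * F w) + (LINT w|lborel. indicator {w. norm w > R} w * F w)"
proof -
  have "(LINT w|lborel. F w) =
      (LINT w|lborel. indicator (cball 0 R) w * F w + indicator {w. norm w > R} w * F w)"
    by (intro Bochner_Integration.integral_cong) (auto simp: indicator_def)
  also have "\<dots> = (LINT w|lborel. indicator (cball 0 R) w * F w) + (LINT w|lborel. indicator {w. norm w > R} w * F w)"
    using assms by (intro Bochner_Integration.integral_add integrable_indicator_times) auto
  finally show ?thesis .
qed

lemma integral_le_of_nn_integral_le:
  fixes F :: "'a::euclidean_space \<Rightarrow> real"
  assumes "F \<in> borel_measurable borel" "\<And>z. F z \<ge> 0"
    and "(\<integral>\<^sup>+z. ennreal (F z) \<partial>lborel) \<le> ennreal b" "b \<ge> 0"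
  shows "integrable lborel F" "(LINT z|lborel. F z) \<le> b"
proof -
  show "integrable lborel F"
    using assms by (intro integrableI_nonneg) (auto intro: le_less_trans)
  have "(LINT z|lborel. F z) = enn2real (\<integral>\<^sup>+z. ennreal (F z) \<partial>lborel)"
    using assms by (intro integral_eq_nn_integral) auto
  also have "\<dots> \<le> b" using assms(3,4) by (simp add: enn2real_leI)
  finally show "(LINT z|lborel. F z) \<le> b" .
qed

lemma integral_abs_diff_le:
  fixes F G w :: "'a::euclidean_space \<Rightarrow> real"
  assumes "F \<in> borel_measurable borel" "integrable lborel G" "integrable lborel w"
    and "\<And>z. \<bar>F z - G z\<bar> \<le> \<epsilon> * w z"
  shows "\<bar>(LINT z|lborel. F z) - (LINT z|lborel. G z)\<bar> \<le> \<epsilon> * (LINT z|lborel. w z)"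
proof -
  have d: "integrable lborel (\<lambda>z. F z - G z)"
    by (rule Bochner_Integration.integrable_bound[of _ "\<lambda>z. \<epsilon> * w z"])
       (use assms in \<open>auto intro!: AE_I2 intro: order_trans[OF _ abs_ge_self]\<close>)
  then have "integrable lborel F"
    using Bochner_Integration.integrable_add[OF d assms(2)] by simp
  then have "\<bar>(LINT z|lborel. F z) - (LINT z|lborel. G z)\<bar> = \<bar>LINT z|lborel. F z - G z\<bar>"
    using assms(2) by simp
  also have "\<dots> \<le> (LINT z|lborel. \<bar>F z - G z\<bar>)" by (rule integral_abs_bound)
  also have "\<dots> \<le> (LINT z|lborel. \<epsilon> * w z)"
    using d assms by (intro integral_mono) auto
  finally show ?thesis by simp
qed

lemma tendsto_integral_dominated_on:
  fixes F :: "real \<Rightarrow> 'a::euclidean_space \<Rightarrow> real"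
  assumes S: "S \<in> sets borel" and w: "integrable lborel w"
    and meas: "\<And>s. F s \<in> borel_measurable borel" "G \<in> borel_measurable borel"
    and lim: "\<And>z. z \<in> S \<Longrightarrow> ((\<lambda>s. F s z) \<longlongrightarrow> G z) at_top"
    and bound: "eventually (\<lambda>s. \<forall>z\<in>S. \<bar>F s z\<bar> \<le> C) at_top"
  shows "((\<lambda>s. LINT z|lborel. indicator S z * (F s z * w z))
      \<longlongrightarrow> (LINT z|lborel. indicator S z * (G z * w z))) at_top"
proof (rule integral_dominated_convergence_at_top[where w = "\<lambda>z. C * (indicator S z * \<bar>w z\<bar>)"])
  show "integrable lborel (\<lambda>z. C * (indicator S z * \<bar>w z\<bar>))"
    using w S by (intro integrable_mult_right integrable_indicator_times integrable_abs) auto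
  show "AE z in lborel. ((\<lambda>s. indicator S z * (F s z * w z)) \<longlongrightarrow> indicator S z * (G z * w z)) at_top"
    using lim by (intro AE_I2) (auto simp: indicator_def intro!: tendsto_intros)
  show "\<forall>\<^sub>F s in at_top. AE z in lborel. norm (indicator S z * (F s z * w z)) \<le> C * (indicator S z * \<bar>w z\<bar>)"
    using bound by eventually_elim (auto simp: indicator_def abs_mult intro!: AE_I2 mult_right_mono)
qed (use meas w S in auto)

lemma uniform_limit_integral_on:
  fixes F :: "real \<Rightarrow> 'i \<Rightarrow> 'a::euclidean_space \<Rightarrow> real"
  assumes S: "S \<in> sets borel" and w: "integrable lborel w"
    and meas: "\<And>s i. F s i \<in> borel_measurable borel"
    and G_int: "\<And>i. i \<in> J \<Longrightarrow> integrable lborel (\<lambda>z. indicator S z * (G i z * w z))"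
    and unif: "uniform_limit (J \<times> S) (\<lambda>s (i, z). F s i z) (\<lambda>(i, z). G i z) at_top"
  shows "uniform_limit J (\<lambda>s i. LINT z|lborel. indicator S z * (F s i z * w z))
      (\<lambda>i. LINT z|lborel. indicator S z * (G i z * w z)) at_top"
  unfolding uniform_limit_iff
proof (intro allI impI)
  fix e :: real assume e: "e > 0"
  define W where "W = (LINT z|lborel. indicator S z * \<bar>w z\<bar>)"
  have W: "W \<ge> 0" unfolding W_def by (simp add: integral_nonneg_AE)
  define \<epsilon> where "\<epsilon> = e / (W + 1)"
  have \<epsilon>: "\<epsilon> > 0" "\<epsilon> * W < e"
    unfolding \<epsilon>_def using e W by (auto simp: field_simps)
  have "eventually (\<lambda>s. \<forall>(i, z)\<in>J \<times> S. dist (F s i z) (G i z) < \<epsilon>) at_top"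
    using uniform_limitD[OF unif \<epsilon>(1)] by (simp add: case_prod_beta)
  then show "eventually (\<lambda>s. \<forall>i\<in>J. dist (LINT z|lborel. indicator S z * (F s i z * w z))
      (LINT z|lborel. indicator S z * (G i z * w z)) < e) at_top"
  proof eventually_elim
    case (elim s)
    show ?case
    proof
      fix i assume i: "i \<in> J"
      have close: "\<bar>indicator S z * (F s i z * w z) - indicator S z * (G i z * w z)\<bar>
          \<le> \<epsilon> * (indicator S z * \<bar>w z\<bar>)" for z
      proof (cases "z \<in> S")
        case True
        then have "\<bar>F s i z - G i z\<bar> \<le> \<epsilon>" using elim i by (force simp: dist_real_def)
        then show ?thesis
          using True by (simp add: abs_mult left_diff_distrib[symmetric] mult_right_mono)
      qed simp
      have "\<bar>(LINT z|lborel. indicator S z * (F s i z * w z)) - (LINT z|lborel. indicator S z * (G i z * w z))\<bar>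
          \<le> \<epsilon> * W"
        unfolding W_def using S w meas G_int[OF i]
        by (intro integral_abs_diff_le[OF _ G_int[OF i]] close integrable_indicator_times integrable_abs) auto
      then show "dist (LINT z|lborel. indicator S z * (F s i z * w z))
          (LINT z|lborel. indicator S z * (G i z * w z)) < e"
        using \<epsilon>(2) by (simp add: dist_real_def)
    qed
  qed
qed

lemma uniform_limit_by_approximation:
  fixes H :: "real \<Rightarrow> 'i \<Rightarrow> real" and Lim :: "'i \<Rightarrow> real"
  assumes "\<And>\<epsilon>. \<epsilon> > 0 \<Longrightarrow> \<exists>P Pl Q Ql. uniform_limit J P Pl at_top \<and> uniform_limit J Q Ql at_top \<and>
     eventually (\<lambda>s. \<forall>i\<in>J. \<bar>H s i - P s i - Q s i\<bar> \<le> \<epsilon>) at_top \<and> (\<forall>i\<in>J. \<bar>Lim i - Pl i - Ql i\<bar> \<le> \<epsilon>)"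
  shows "uniform_limit J H Lim at_top"
  unfolding uniform_limit_iff
proof (intro allI impI)
  fix e :: real assume e: "e > 0"
  obtain P Pl Q Ql where PQ: "uniform_limit J P Pl at_top" "uniform_limit J Q Ql at_top"
    "eventually (\<lambda>s. \<forall>i\<in>J. \<bar>H s i - P s i - Q s i\<bar> \<le> e/4) at_top" "\<forall>i\<in>J. \<bar>Lim i - Pl i - Ql i\<bar> \<le> e/4"
    using assms[of "e/4"] e by auto
  have "eventually (\<lambda>s. \<forall>i\<in>J. dist (P s i) (Pl i) < e/4) at_top"
       "eventually (\<lambda>s. \<forall>i\<in>J. dist (Q s i) (Ql i) < e/4) at_top"
    using uniform_limitD[OF PQ(1), of "e/4"] uniform_limitD[OF PQ(2), of "e/4"] e by simp_all
  then show "eventually (\<lambda>s. \<forall>i\<in>J. dist (H s i) (Lim i) < e) at_top"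
    using PQ(3)
  proof eventually_elim
    case (elim s)
    show ?case
    proof
      fix i assume i: "i \<in> J"
      have "\<bar>P s i - Pl i\<bar> < e/4" "\<bar>Q s i - Ql i\<bar> < e/4"
           "\<bar>H s i - P s i - Q s i\<bar> \<le> e/4" "\<bar>Lim i - Pl i - Ql i\<bar> \<le> e/4"
        using elim PQ(4) i by (auto simp: dist_real_def)
      then show "dist (H s i) (Lim i) < e" unfolding dist_real_def by linarith
    qed
  qed
qed

lemma uniform_limit_mult_bounded_left:
  fixes F :: "real \<Rightarrow> 'i \<Rightarrow> real"
  assumes "uniform_limit I F G at_top" "\<And>i. i \<in> I \<Longrightarrow> \<bar>c i\<bar> \<le> K"
  shows "uniform_limit I (\<lambda>s i. c i * F s i) (\<lambda>i. c i * G i) at_top"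
  unfolding uniform_limit_iff
proof (intro allI impI)
  fix e :: real assume e: "e > 0"
  have K: "\<bar>K\<bar> + 1 > 0" by simp
  have "eventually (\<lambda>s. \<forall>i\<in>I. dist (F s i) (G i) < e / (\<bar>K\<bar> + 1)) at_top"
    using uniform_limitD[OF assms(1), of "e / (\<bar>K\<bar> + 1)"] e by simp
  then show "eventually (\<lambda>s. \<forall>i\<in>I. dist (c i * F s i) (c i * G i) < e) at_top"
  proof eventually_elim
    case (elim s)
    show ?case
    proof
      fix i assume i: "i \<in> I"
      have d: "\<bar>F s i - G i\<bar> < e / (\<bar>K\<bar> + 1)" using elim i by (simp add: dist_real_def)
      have "\<bar>c i * F s i - c i * G i\<bar> = \<bar>c i\<bar> * \<bar>F s i - G i\<bar>"
        by (simp add: abs_mult right_diff_distrib[symmetric])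
      also have "\<dots> \<le> (\<bar>K\<bar> + 1) * \<bar>F s i - G i\<bar>" using assms(2)[OF i] by (intro mult_right_mono) auto
      also have "\<dots> < (\<bar>K\<bar> + 1) * (e / (\<bar>K\<bar> + 1))" using d K by (intro mult_strict_left_mono) auto
      also have "\<dots> = e" using K by simp
      finally show "dist (c i * F s i) (c i * G i) < e" by (simp add: dist_real_def)
    qed
  qed
qed

lemma uniform_limit_sum_lessThan:
  fixes u :: "nat \<Rightarrow> real \<Rightarrow> 'i \<Rightarrow> real"
  assumes "\<And>n. uniform_limit I (u n) (v n) at_top"
  shows "uniform_limit I (\<lambda>s i. \<Sum>n<N. u n s i) (\<lambda>i. \<Sum>n<N. v n i) at_top"
proof (induction N)
  case (Suc N)
  then show ?case using uniform_limit_add[OF Suc assms[of N]] by simp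
qed (simp add: uniform_limit_const)

lemma uniform_limit_suminf_dominated:
  fixes u :: "nat \<Rightarrow> real \<Rightarrow> 'i \<Rightarrow> real" and v :: "nat \<Rightarrow> 'i \<Rightarrow> real" and m :: "nat \<Rightarrow> real"
  assumes lim: "\<And>n. uniform_limit I (u n) (v n) at_top"
    and m: "summable m"
    and bu: "eventually (\<lambda>s. \<forall>n. \<forall>i\<in>I. \<bar>u n s i\<bar> \<le> m n) at_top"
    and bv: "\<And>n i. i \<in> I \<Longrightarrow> \<bar>v n i\<bar> \<le> m n"
  shows "uniform_limit I (\<lambda>s i. \<Sum>n. u n s i) (\<lambda>i. \<Sum>n. v n i) at_top"
  unfolding uniform_limit_iff
proof (intro allI impI)
  fix e :: real assume e: "e > 0"
  obtain N where N: "\<And>n. n \<ge> N \<Longrightarrow> norm (\<Sum>i. m (i + n)) < e / 3"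
    using suminf_exist_split[OF _ m, of "e/3"] e by auto
  have mN: "(\<Sum>i. m (i + N)) < e / 3" using N[of N] by simp
  have msN: "summable (\<lambda>i. m (i + N))" using m by (rule summable_ignore_initial_segment)
  have tail: "\<bar>\<Sum>n. w (n + N)\<bar> \<le> (\<Sum>n. m (n + N))" if "\<And>n. \<bar>w n\<bar> \<le> m n" for w :: "nat \<Rightarrow> real"
  proof -
    have sa: "summable (\<lambda>n. \<bar>w (n + N)\<bar>)"
      by (rule summable_comparison_test[OF _ msN]) (use that in auto)
    then have "\<bar>\<Sum>n. w (n + N)\<bar> \<le> (\<Sum>n. \<bar>w (n + N)\<bar>)"
      using summable_norm[of "\<lambda>n. w (n + N)"] by simp
    also have "\<dots> \<le> (\<Sum>n. m (n + N))"
      by (rule suminf_le) (use that msN sa in auto)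
    finally show ?thesis .
  qed
  have split: "(\<Sum>n. w n) = (\<Sum>n. w (n + N)) + (\<Sum>n<N. w n)"
    if "\<And>n. \<bar>w n\<bar> \<le> m n" for w :: "nat \<Rightarrow> real"
    by (rule suminf_split_initial_segment, rule summable_comparison_test[OF _ m]) (use that in auto)
  have "eventually (\<lambda>s. \<forall>i\<in>I. dist (\<Sum>n<N. u n s i) (\<Sum>n<N. v n i) < e / 3) at_top"
    using uniform_limitD[OF uniform_limit_sum_lessThan[where N=N, OF lim], of "e/3"] e by simp
  then show "eventually (\<lambda>s. \<forall>i\<in>I. dist (\<Sum>n. u n s i) (\<Sum>n. v n i) < e) at_top"
    using bu
  proof eventually_elim
    case (elim s)
    show ?case
    proof
      fix i assume i: "i \<in> I"
      have bu': "\<And>n. \<bar>u n s i\<bar> \<le> m n" and bv': "\<And>n. \<bar>v n i\<bar> \<le> m n"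
        using elim i bv by auto
      have "\<bar>(\<Sum>n<N. u n s i) - (\<Sum>n<N. v n i)\<bar> < e / 3" using elim i by (simp add: dist_real_def)
      then show "dist (\<Sum>n. u n s i) (\<Sum>n. v n i) < e"
        using tail[OF bu'] tail[OF bv'] mN unfolding dist_real_def split[OF bu'] split[OF bv'] by linarith
    qed
  qed
qed

lemma exp_coeff_le:
  fixes t t0 :: real
  assumes "0 < t" "t \<le> t0"
  shows "0 \<le> t ^ n / fact (Suc n)" "t ^ n / fact (Suc n) \<le> t0 ^ n / fact n"
proof -
  show "0 \<le> t ^ n / fact (Suc n)" using assms by simp
  have "t ^ n / fact (Suc n) \<le> t0 ^ n / fact (Suc n)" using assms by (intro divide_right_mono power_mono) auto
  also have "\<dots> \<le> t0 ^ n / fact n" using assms by (intro divide_left_mono) (auto simp: fact_mono)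
  finally show "t ^ n / fact (Suc n) \<le> t0 ^ n / fact n" .
qed

lemma summable_exp_majorant: "summable (\<lambda>n. t ^ n / fact n * (C * B ^ Suc n + D * M ^ n :: real))"
proof -
  have "summable (\<lambda>n. (C * B) * (inverse (fact n) * (t * B) ^ n) + D * (inverse (fact n) * (t * M) ^ n))"
    by (intro summable_add summable_mult summable_exp)
  then show ?thesis by (simp add: power_mult_distrib field_simps)
qed

section \<open>Convolution powers of a finite density\<close>

locale finite_density =
  fixes nu :: "'a::euclidean_space \<Rightarrow> real"
  assumes nu_meas: "nu \<in> borel_measurable lborel"
    and nu_nonneg: "\<And>x. nu x \<ge> 0"
    and nu_finite: "integrable lborel nu"
begin

lemma nu_borel[measurable]: "nu \<in> borel_measurable borel"
  using nu_meas by simp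

abbreviation mass :: real where "mass \<equiv> total_mass nu"

lemma mass_nonneg: "mass \<ge> 0"
  unfolding total_mass_def using nu_nonneg by (simp add: integral_nonneg_AE)

lemma nn_integral_nu: "(\<integral>\<^sup>+x. ennreal (nu x) \<partial>lborel) = ennreal mass"
  unfolding total_mass_def using nu_finite nu_nonneg by (simp add: nn_integral_eq_integral)

lemma conv_dens_measurable_nonneg:
  "conv_dens nu (Suc n) \<in> borel_measurable borel \<and> (\<forall>x. conv_dens nu (Suc n) x \<ge> 0)"
proof (induction n)
  case (Suc n)
  then have [measurable]: "conv_dens nu (Suc n) \<in> borel_measurable borel" by blast
  have "(\<lambda>x. LINT y|lborel. conv_dens nu (Suc n) (x - y) * nu y) \<in> borel_measurable borel"
    by measurable
  then show ?case using Suc nu_nonneg by (auto intro!: integral_nonneg_AE)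
qed (use nu_nonneg in simp)

lemma conv_dens_measurable[measurable]: "conv_dens nu (Suc n) \<in> borel_measurable borel"
  using conv_dens_measurable_nonneg by blast

lemma conv_dens_nonneg: "conv_dens nu (Suc n) x \<ge> 0"
  using conv_dens_measurable_nonneg by blast

lemma conv_dens_Suc_Suc_eq_enn2real:
  "conv_dens nu (Suc (Suc n)) x = enn2real (\<integral>\<^sup>+y. ennreal (conv_dens nu (Suc n) (x - y) * nu y) \<partial>lborel)"
  unfolding conv_dens.simps by (rule integral_eq_nn_integral) (auto simp: conv_dens_nonneg nu_nonneg)

lemma conv_dens_Suc_Suc_le:
  assumes "(\<integral>\<^sup>+y. ennreal (conv_dens nu (Suc n) (x - y) * nu y) \<partial>lborel) \<le> ennreal b" "b \<ge> 0"
  shows "conv_dens nu (Suc (Suc n)) x \<le> b"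
  unfolding conv_dens_Suc_Suc_eq_enn2real using assms by (simp add: enn2real_leI)

text \<open>Against a multiplicative weight \<open>\<phi>\<close> (such as \<open>x \<mapsto> exp (a \<bullet> x)\<close>), convolution with \<open>nu\<close>
  becomes multiplication (Tonelli and translation invariance).\<close>

lemma nn_integral_conv_multiplicative:
  fixes g \<phi> :: "'a \<Rightarrow> real"
  assumes [measurable]: "g \<in> borel_measurable borel" "\<phi> \<in> borel_measurable borel"
    and g0: "\<And>x. g x \<ge> 0" and p0: "\<And>x. \<phi> x \<ge> 0"
    and mult: "\<And>x y. \<phi> x = \<phi> (x - y) * \<phi> y"
  shows "(\<integral>\<^sup>+x. (\<integral>\<^sup>+y. ennreal (g (x - y) * nu y) \<partial>lborel) * ennreal (\<phi> x) \<partial>lborel)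
       = (\<integral>\<^sup>+x. ennreal (g x * \<phi> x) \<partial>lborel) * (\<integral>\<^sup>+y. ennreal (nu y * \<phi> y) \<partial>lborel)"
proof -
  have split: "ennreal (g (x - y) * nu y) * ennreal (\<phi> x) = ennreal (g (x - y) * \<phi> (x - y)) * ennreal (nu y * \<phi> y)"
    for x y
  proof -
    have "g (x - y) * nu y * \<phi> x = g (x - y) * \<phi> (x - y) * (nu y * \<phi> y)"
      using mult[of x y] by (simp add: algebra_simps)
    then show ?thesis
      using g0 p0 nu_nonneg by (simp add: ennreal_mult'[symmetric] mult_nonneg_nonneg)
  qed
  have "(\<integral>\<^sup>+x. (\<integral>\<^sup>+y. ennreal (g (x - y) * nu y) \<partial>lborel) * ennreal (\<phi> x) \<partial>lborel)
      = (\<integral>\<^sup>+x. (\<integral>\<^sup>+y. ennreal (g (x - y) * \<phi> (x - y)) * ennreal (nu y * \<phi> y) \<partial>lborel) \<partial>lborel)"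
    by (simp add: nn_integral_multc[symmetric] split)
  also have "\<dots> = (\<integral>\<^sup>+y. (\<integral>\<^sup>+x. ennreal (g (x - y) * \<phi> (x - y)) \<partial>lborel) * ennreal (nu y * \<phi> y) \<partial>lborel)"
    by (subst lborel_pair.Fubini') (simp_all add: nn_integral_multc)
  also have "\<dots> = (\<integral>\<^sup>+y. (\<integral>\<^sup>+x. ennreal (g x * \<phi> x) \<partial>lborel) * ennreal (nu y * \<phi> y) \<partial>lborel)"
    by (simp add: nn_integral_shift_lborel[of "\<lambda>x. ennreal (g x * \<phi> x)"])
  also have "\<dots> = (\<integral>\<^sup>+x. ennreal (g x * \<phi> x) \<partial>lborel) * (\<integral>\<^sup>+y. ennreal (nu y * \<phi> y) \<partial>lborel)"
    by (rule nn_integral_cmult) measurable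
  finally show ?thesis .
qed

lemma conv_dens_Suc_Suc_AE:
  assumes "(\<integral>\<^sup>+x. ennreal (conv_dens nu (Suc n) x) \<partial>lborel) = ennreal (mass ^ Suc n)"
  shows "AE x in lborel. ennreal (conv_dens nu (Suc (Suc n)) x) =
     (\<integral>\<^sup>+y. ennreal (conv_dens nu (Suc n) (x - y) * nu y) \<partial>lborel)"
proof -
  have "(\<integral>\<^sup>+x. (\<integral>\<^sup>+y. ennreal (conv_dens nu (Suc n) (x - y) * nu y) \<partial>lborel) \<partial>lborel)
      = ennreal (mass ^ Suc (Suc n))"
    using nn_integral_conv_multiplicative[of "conv_dens nu (Suc n)" "\<lambda>_. 1"] assms nn_integral_nu mass_nonneg
    by (simp add: conv_dens_nonneg ennreal_mult'[symmetric] ennreal_power mult.commute)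
  then have "AE x in lborel. (\<integral>\<^sup>+y. ennreal (conv_dens nu (Suc n) (x - y) * nu y) \<partial>lborel) \<noteq> \<infinity>"
    by (intro nn_integral_noteq_infinite) auto
  then show ?thesis
    by eventually_elim (simp add: conv_dens_Suc_Suc_eq_enn2real less_top del: conv_dens.simps)
qed

lemma nn_integral_conv_dens: "(\<integral>\<^sup>+x. ennreal (conv_dens nu (Suc n) x) \<partial>lborel) = ennreal (mass ^ Suc n)"
proof (induction n)
  case (Suc n)
  have "(\<integral>\<^sup>+x. ennreal (conv_dens nu (Suc (Suc n)) x) \<partial>lborel)
      = (\<integral>\<^sup>+x. (\<integral>\<^sup>+y. ennreal (conv_dens nu (Suc n) (x - y) * nu y) \<partial>lborel) \<partial>lborel)"
    by (rule nn_integral_cong_AE[OF conv_dens_Suc_Suc_AE[OF Suc]])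
  also have "\<dots> = ennreal (mass ^ Suc (Suc n))"
    using nn_integral_conv_multiplicative[of "conv_dens nu (Suc n)" "\<lambda>_. 1"] Suc nn_integral_nu mass_nonneg
    by (simp add: conv_dens_nonneg ennreal_mult'[symmetric] ennreal_power mult.commute)
  finally show ?case .
qed (use nn_integral_nu in simp)

lemma nn_integral_conv_dens_multiplicative:
  fixes \<phi> :: "'a \<Rightarrow> real"
  assumes [measurable]: "\<phi> \<in> borel_measurable borel"
    and p0: "\<And>x. \<phi> x \<ge> 0"
    and mult: "\<And>x y. \<phi> x = \<phi> (x - y) * \<phi> y"
  shows "(\<integral>\<^sup>+x. ennreal (conv_dens nu (Suc n) x * \<phi> x) \<partial>lborel) = (\<integral>\<^sup>+x. ennreal (nu x * \<phi> x) \<partial>lborel) ^ Suc n"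
proof (induction n)
  case (Suc n)
  have "(\<integral>\<^sup>+x. ennreal (conv_dens nu (Suc (Suc n)) x * \<phi> x) \<partial>lborel)
      = (\<integral>\<^sup>+x. ennreal (conv_dens nu (Suc (Suc n)) x) * ennreal (\<phi> x) \<partial>lborel)"
    using p0 conv_dens_nonneg[of "Suc n"] by (intro nn_integral_cong) (simp add: ennreal_mult')
  also have "\<dots> = (\<integral>\<^sup>+x. (\<integral>\<^sup>+y. ennreal (conv_dens nu (Suc n) (x - y) * nu y) \<partial>lborel) * ennreal (\<phi> x) \<partial>lborel)"
    using conv_dens_Suc_Suc_AE[OF nn_integral_conv_dens[of n]]
    by (intro nn_integral_cong_AE) (auto elim!: eventually_mono simp del: conv_dens.simps)
  also have "\<dots> = (\<integral>\<^sup>+x. ennreal (conv_dens nu (Suc n) x * \<phi> x) \<partial>lborel) * (\<integral>\<^sup>+y. ennreal (nu y * \<phi> y) \<partial>lborel)"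
    by (rule nn_integral_conv_multiplicative) (auto simp: conv_dens_nonneg p0 intro: mult)
  finally show ?case using Suc by (simp add: mult.commute)
qed simp

lemma integrable_conv_dens: "integrable lborel (conv_dens nu (Suc n))"
  using nn_integral_conv_dens[of n] by (intro integrableI_nonneg) (auto simp: conv_dens_nonneg)

lemma nn_integral_conv_dens_reflect:
  "(\<integral>\<^sup>+y. ennreal (conv_dens nu (Suc n) (x - y)) \<partial>lborel) = ennreal (mass ^ Suc n)"
  using nn_integral_reflect_lborel[of "\<lambda>y. ennreal (conv_dens nu (Suc n) y)" x] nn_integral_conv_dens[of n]
  by simp

lemma ptilde_div_eq_series:
  assumes t: "t > 0" and c: "c > 0"
    and summable: "summable (\<lambda>n. t ^ n / fact (Suc n) * (conv_dens nu (Suc n) x / c))"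
  shows "ptilde nu t x / (t * c) = exp (- t * mass) * (\<Sum>n. t ^ n / fact (Suc n) * (conv_dens nu (Suc n) x / c))"
proof -
  define g where "g n = t ^ n / fact (Suc n) * (conv_dens nu (Suc n) x / c)" for n
  have "(\<lambda>n. (t * c) * g n) sums ((t * c) * (\<Sum>n. g n))"
    using summable unfolding g_def by (intro sums_mult summable_sums)
  moreover have "(t * c) * g n = t ^ Suc n * conv_dens nu (Suc n) x / fact (Suc n)" for n
    unfolding g_def using t c by (simp add: field_simps del: fact_Suc)
  ultimately have "(\<Sum>n. t ^ Suc n * conv_dens nu (Suc n) x / fact (Suc n)) = (t * c) * (\<Sum>n. g n)"
    by (simp add: sums_iff)
  then show ?thesis unfolding ptilde_def g_def using t c by (simp add: field_simps)
qed

lemma nn_integral_nu_conv_dens_comb: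
  assumes "a \<ge> 0" "b \<ge> 0"
  shows "(\<integral>\<^sup>+y. ennreal (a * nu y + b * conv_dens nu (Suc n) (x - y)) \<partial>lborel)
    = ennreal (a * mass + b * mass ^ Suc n)"
proof -
  have "(\<integral>\<^sup>+y. ennreal (a * nu y + b * conv_dens nu (Suc n) (x - y)) \<partial>lborel)
     = (\<integral>\<^sup>+y. ennreal a * ennreal (nu y) + ennreal b * ennreal (conv_dens nu (Suc n) (x - y)) \<partial>lborel)"
    using assms by (intro nn_integral_cong)
      (simp add: ennreal_plus[symmetric] ennreal_mult[symmetric] nu_nonneg conv_dens_nonneg del: ennreal_plus)
  also have "\<dots> = ennreal a * ennreal mass + ennreal b * ennreal (mass ^ Suc n)"
    by (simp add: nn_integral_add nn_integral_cmult nn_integral_nu nn_integral_conv_dens_reflect)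
  finally show ?thesis using assms mass_nonneg
    by (simp add: ennreal_mult[symmetric] ennreal_plus[symmetric] del: ennreal_plus)
qed

end

section \<open>Consequences of conditions (B) and (C)\<close>

locale levy_conditions = finite_density nu for nu :: "'a::euclidean_space \<Rightarrow> real" +
  fixes f :: "real \<Rightarrow> real" and C0 :: real and E :: "'a set" and \<kappa> :: real
  assumes f_pos: "\<And>r. r > 0 \<Longrightarrow> f r > 0"
    and f_mono: "\<And>r s. 0 < r \<Longrightarrow> r \<le> s \<Longrightarrow> f s \<le> f r"
    and C0_pos: "C0 > 0"
    and nu_le: "\<And>x. x \<noteq> 0 \<Longrightarrow> nu x \<le> C0 * f (norm x)"
    and liminf_pos: "Liminf (at_right 0)
          (\<lambda>r. ereal ((set_lebesgue_integral lborel {x. norm x > r} nu) / (f r * r ^ DIM('a)))) > 0"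
    and K_mono: "\<And>r s. 0 < r \<Longrightarrow> r \<le> s \<Longrightarrow> K_fun TYPE('a) f s \<le> K_fun TYPE('a) f r"
    and K_lim: "(K_fun TYPE('a) f \<longlongrightarrow> 0) at_top"
    and E_sphere: "E \<subseteq> sphere 0 1"
    and E_ne: "E \<noteq> {}"
    and \<kappa>_nonneg: "\<kappa> \<ge> 0"
    and C_lim: "\<And>\<theta> y. \<theta> \<in> E \<Longrightarrow>
          ((\<lambda>r. nu (r *\<^sub>R \<theta> - y) / nu (r *\<^sub>R \<theta>)) \<longlongrightarrow> exp (\<kappa> * (\<theta> \<bullet> y))) at_top"
    and C_inf: "\<exists>c>0. \<forall>x\<in>Gamma_cone E. nu x / f (norm x) \<ge> c"
begin

definition cone_const :: real
  where "cone_const = (SOME c. c > 0 \<and> (\<forall>x\<in>Gamma_cone E. nu x / f (norm x) \<ge> c))"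

lemma cone_const_pos: "cone_const > 0"
  and cone_const_le: "x \<in> Gamma_cone E \<Longrightarrow> nu x / f (norm x) \<ge> cone_const"
  using someI_ex[OF C_inf] unfolding cone_const_def by auto

lemma norm_dir: "\<theta> \<in> E \<Longrightarrow> norm \<theta> = 1"
  using E_sphere by auto

lemma f_norm_pos: "r \<ge> 0 \<Longrightarrow> norm x > r \<Longrightarrow> f (norm x) > 0"
  using f_pos[of "norm x"] by linarith

lemma dir_nonzero: "\<theta> \<in> E \<Longrightarrow> \<theta> \<noteq> 0"
  using norm_dir by fastforce

lemma nu_ray_lower: assumes "\<theta> \<in> E" "s > 0" shows "nu (s *\<^sub>R \<theta>) \<ge> cone_const * f s"
proof -
  have n: "norm (s *\<^sub>R \<theta>) = s" using assms norm_dir by simp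
  have "s *\<^sub>R \<theta> \<in> Gamma_cone E"
    unfolding Gamma_cone_def using assms n norm_dir[OF assms(1)] by auto
  then have "nu (s *\<^sub>R \<theta>) / f s \<ge> cone_const" using cone_const_le n by fastforce
  then show ?thesis using f_pos[OF assms(2)] by (simp add: pos_le_divide_eq)
qed

lemma nu_ray_pos: assumes "\<theta> \<in> E" "s > 0" shows "nu (s *\<^sub>R \<theta>) > 0"
  using nu_ray_lower[OF assms] mult_pos_pos[OF cone_const_pos f_pos[OF assms(2)]] by linarith

text \<open>Along a ray of \<open>E\<close>, \<open>nu\<close> is comparable to \<open>f\<close> from both sides, so the ratio limit in
  condition (C) makes \<open>f\<close> itself shift-regular.\<close>

lemma f_shift_le: assumes "a \<ge> 0" shows "\<exists>L S. L > 0 \<and> S > a \<and> (\<forall>u\<ge>S. f (u - a) \<le> L * f u)"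
proof -
  obtain \<theta> where th: "\<theta> \<in> E" using E_ne by blast
  define q where "q = exp (\<kappa> * (\<theta> \<bullet> (a *\<^sub>R \<theta>))) + 1"
  have "eventually (\<lambda>r. nu (r *\<^sub>R \<theta> - a *\<^sub>R \<theta>) / nu (r *\<^sub>R \<theta>) < q) at_top"
    unfolding q_def using C_lim[OF th] by (rule order_tendstoD) simp
  then obtain S0 where S0: "\<And>r. r \<ge> S0 \<Longrightarrow> nu (r *\<^sub>R \<theta> - a *\<^sub>R \<theta>) / nu (r *\<^sub>R \<theta>) < q"
    by (auto simp: eventually_at_top_linorder)
  have q: "q > 0" unfolding q_def by (simp add: add_pos_pos)
  have "f (u - a) \<le> (q * C0 / cone_const) * f u" if u: "u \<ge> max S0 (a + 1)" for u
  proof -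
    have ua: "u - a > 0" "u > 0" "u \<ge> S0" using u \<open>a \<ge> 0\<close> by auto
    have eq: "u *\<^sub>R \<theta> - a *\<^sub>R \<theta> = (u - a) *\<^sub>R \<theta>" by (simp add: algebra_simps)
    have "cone_const * f (u - a) \<le> nu ((u - a) *\<^sub>R \<theta>)" using nu_ray_lower[OF th ua(1)] .
    also have "\<dots> \<le> q * nu (u *\<^sub>R \<theta>)"
      using S0[OF ua(3)] nu_ray_pos[OF th ua(2)] unfolding eq by (simp add: divide_less_eq less_imp_le)
    also have "\<dots> \<le> q * (C0 * f u)"
      using nu_le[of "u *\<^sub>R \<theta>"] ua(2) norm_dir[OF th] dir_nonzero[OF th] q by (intro mult_left_mono) auto
    finally show ?thesis using cone_const_pos by (simp add: pos_divide_le_eq field_simps)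
  qed
  then show ?thesis using q C0_pos cone_const_pos
    by (intro exI[of _ "q * C0 / cone_const"] exI[of _ "max S0 (a + 1)"]) auto
qed

lemma nn_integral_K_bound:
  fixes x :: 'a
  assumes "norm x > 1"
  shows "(\<integral>\<^sup>+y. indicator {y. norm (x - y) > R \<and> norm y > R} y * ennreal (f (norm (x - y)) * f (norm y)) \<partial>lborel)
     \<le> K_fun TYPE('a) f R * ennreal (f (norm x))"
proof -
  let ?X = "(\<integral>\<^sup>+y. indicator {y. norm (x - y) > R \<and> norm y > R} y * ennreal (f (norm (x - y)) * f (norm y)) \<partial>lborel)"
  have fx: "f (norm x) > 0" using f_pos[of "norm x"] assms by linarith
  have "?X / ennreal (f (norm x)) \<le> K_fun TYPE('a) f R"
    unfolding K_fun_def by (rule SUP_upper2[of x]) (use assms in auto)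
  then have "?X / ennreal (f (norm x)) * ennreal (f (norm x)) \<le> K_fun TYPE('a) f R * ennreal (f (norm x))"
    by (rule mult_right_mono) simp
  moreover have "?X / ennreal (f (norm x)) * ennreal (f (norm x)) = ?X"
    using fx by (simp add: ennreal_divide_times ennreal_divide_self)
  ultimately show ?thesis by simp
qed

text \<open>The lower bound on \<open>liminf\<close> in condition (B), with \<open>nu\<close> of finite mass, forces \<open>f r = O(r^{-d})\<close> at \<open>0\<close>.\<close>

lemma f_le_near_zero: "\<exists>A r1. A > 0 \<and> r1 > 0 \<and> (\<forall>r. 0 < r \<and> r < r1 \<longrightarrow> f r \<le> A / r ^ DIM('a))"
proof -
  let ?g = "\<lambda>r. ereal ((set_lebesgue_integral lborel {x. norm x > r} nu) / (f r * r ^ DIM('a)))"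
  obtain \<delta> where d: "\<delta> > 0" "ereal \<delta> < Liminf (at_right 0) ?g"
  proof (cases "Liminf (at_right 0) ?g")
    case (real l) then show ?thesis using liminf_pos by (intro that[of "l/2"]) auto
  next
    case PInf then show ?thesis by (intro that[of 1]) auto
  qed (use liminf_pos in auto)
  have "eventually (\<lambda>r. ereal \<delta> < ?g r) (at_right 0)"
    by (rule less_LiminfD[OF d(2)])
  then obtain b where b: "b > 0" "\<And>r. 0 < r \<Longrightarrow> r < b \<Longrightarrow> ereal \<delta> < ?g r"
    unfolding eventually_at_right_field by auto
  have "f r \<le> (mass / \<delta> + 1) / r ^ DIM('a)" if r: "0 < r" "r < b" for r
  proof -
    have fr: "f r * r ^ DIM('a) > 0" using f_pos r by simp
    have "set_lebesgue_integral lborel {x. norm x > r} nu = (LINT x|lborel. indicator {x. norm x > r} x * nu x)"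
      unfolding set_lebesgue_integral_def by simp
    also have "\<dots> \<le> mass"
      unfolding total_mass_def using nu_finite nu_nonneg
      by (intro integral_mono integrable_indicator_times) (auto simp: indicator_def)
    finally have I: "set_lebesgue_integral lborel {x. norm x > r} nu \<le> mass" .
    have "\<delta> * (f r * r ^ DIM('a)) < set_lebesgue_integral lborel {x. norm x > r} nu"
      using b(2)[OF r] fr by (simp add: less_divide_eq)
    then have "f r \<le> (mass / \<delta>) / r ^ DIM('a)"
      using I d(1) r by (simp add: field_simps)
    also have "\<dots> \<le> (mass / \<delta> + 1) / r ^ DIM('a)"
      using r by (intro divide_right_mono) auto
    finally show ?thesis .
  qed
  moreover have "mass / \<delta> + 1 > 0" using mass_nonneg d(1) by (simp add: add_nonneg_pos)
  ultimately show ?thesis using b(1) by blast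
qed

lemma f_norm_measurable[measurable]: "(\<lambda>y::'a. f (norm y)) \<in> borel_measurable borel"
proof -
  have "mono_on {0<..} (\<lambda>r. - f r)" by (auto intro!: mono_onI simp: f_mono)
  then have "(\<lambda>r. - (- f r)) \<in> borel_measurable (restrict_space borel {0<..})"
    by (intro borel_measurable_uminus borel_measurable_mono_on_fnc)
  then have "(\<lambda>r. if 0 < r then f r else f 0) \<in> borel_measurable borel"
    by (subst measurable_If_restrict_space_iff) (auto simp: greaterThan_def)
  then have "(\<lambda>y::'a. (\<lambda>r. if 0 < r then f r else f 0) (norm y)) \<in> borel_measurable borel"
    by (rule measurable_compose[rotated]) simp
  moreover have "(\<lambda>y::'a. (\<lambda>r. if 0 < r then f r else f 0) (norm y)) = (\<lambda>y. f (norm y))"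
    by (auto simp: fun_eq_iff)
  ultimately show ?thesis by simp
qed

lemma conv_integrand_le_two_regions:
  assumes r: "0 < r" "r \<le> norm x"
    and IH: "\<And>w. r / 2 \<le> norm w \<Longrightarrow> conv_dens nu (Suc n) w \<le> \<beta>" and \<beta>: "\<beta> \<ge> 0"
  shows "conv_dens nu (Suc n) (x - y) * nu y \<le> \<beta> * nu y + C0 * f (r / 2) * conv_dens nu (Suc n) (x - y)"
proof -
  have g0: "conv_dens nu (Suc n) (x - y) \<ge> 0" "nu y \<ge> 0" using conv_dens_nonneg nu_nonneg by auto
  have fr: "f (r / 2) \<ge> 0" using f_pos[of "r / 2"] r by simp
  show ?thesis
  proof (cases "norm y < norm x / 2")
    case True
    then have "r / 2 \<le> norm (x - y)" using norm_triangle_ineq2[of x y] r by simp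
    then have "conv_dens nu (Suc n) (x - y) * nu y \<le> \<beta> * nu y"
      using IH g0 by (intro mult_right_mono) auto
    moreover have "0 \<le> C0 * f (r / 2) * conv_dens nu (Suc n) (x - y)" using C0_pos fr g0 by simp
    ultimately show ?thesis by linarith
  next
    case False
    then have y: "y \<noteq> 0" "r / 2 \<le> norm y" using r by auto
    have "nu y \<le> C0 * f (norm y)" using nu_le[OF y(1)] .
    also have "\<dots> \<le> C0 * f (r / 2)" using y r C0_pos by (intro mult_left_mono f_mono) auto
    finally have "conv_dens nu (Suc n) (x - y) * nu y \<le> conv_dens nu (Suc n) (x - y) * (C0 * f (r / 2))"
      using g0 by (intro mult_left_mono)
    moreover have "0 \<le> \<beta> * nu y" using \<beta> g0 by simp
    ultimately show ?thesis by (simp add: algebra_simps)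
  qed
qed

text \<open>One of \<open>y\<close>, \<open>x - y\<close> has norm at least \<open>|x|/2\<close>, so each convolution step halves the radius.\<close>

lemma conv_dens_le_f_scaled:
  assumes "0 < r" "r \<le> norm w"
  shows "conv_dens nu (Suc n) w \<le> real (Suc n) * C0 * max mass 1 ^ n * f (r / 2 ^ n)"
  using assms
proof (induction n arbitrary: r w)
  case 0
  then have "w \<noteq> 0" by auto
  then have "nu w \<le> C0 * f (norm w)" by (rule nu_le)
  also have "\<dots> \<le> C0 * f r" using 0 C0_pos by (intro mult_left_mono f_mono) auto
  finally show ?case by simp
next
  case (Suc n)
  define \<beta> where "\<beta> = real (Suc n) * C0 * max mass 1 ^ n * f (r / 2 ^ Suc n)"
  have fr: "f (r / 2) \<ge> 0" "f (r / 2 ^ Suc n) \<ge> 0" using f_pos[of "r / 2"] f_pos[of "r / 2 ^ Suc n"] Suc.prems by auto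
  then have \<beta>: "\<beta> \<ge> 0" unfolding \<beta>_def using C0_pos by simp
  have "(\<integral>\<^sup>+y. ennreal (conv_dens nu (Suc n) (w - y) * nu y) \<partial>lborel)
      \<le> (\<integral>\<^sup>+y. ennreal (\<beta> * nu y + C0 * f (r / 2) * conv_dens nu (Suc n) (w - y)) \<partial>lborel)"
    using Suc.IH[of "r / 2"] Suc.prems \<beta>
    by (intro nn_integral_mono ennreal_leI conv_integrand_le_two_regions) (auto simp: \<beta>_def)
  also have "\<dots> = ennreal (\<beta> * mass + C0 * f (r / 2) * mass ^ Suc n)"
    using \<beta> C0_pos fr by (intro nn_integral_nu_conv_dens_comb) auto
  finally have le: "conv_dens nu (Suc (Suc n)) w \<le> \<beta> * mass + C0 * f (r / 2) * mass ^ Suc n"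
    using \<beta> C0_pos fr mass_nonneg by (intro conv_dens_Suc_Suc_le) auto
  have "r / 2 ^ Suc n \<le> r / 2" using Suc.prems by (simp add: divide_le_eq field_simps)
  then have f1: "f (r / 2) \<le> f (r / 2 ^ Suc n)" using Suc.prems by (intro f_mono) auto
  have "\<beta> * mass \<le> \<beta> * max mass 1" using \<beta> by (intro mult_left_mono) auto
  moreover have "C0 * f (r / 2) * mass ^ Suc n \<le> C0 * f (r / 2 ^ Suc n) * max mass 1 ^ Suc n"
    using f1 C0_pos fr mass_nonneg by (intro mult_mono power_mono) auto
  ultimately show ?case using le unfolding \<beta>_def by (simp add: algebra_simps)
qed

lemma conv_dens_le_geometric:
  assumes R1: "R1 > 0"
  shows "\<exists>F0 B1. F0 \<ge> 0 \<and> B1 \<ge> 1 \<and> (\<forall>n w. R1 \<le> norm w \<longrightarrow> conv_dens nu (Suc n) w \<le> F0 * B1 ^ n)"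
proof -
  obtain A0 r1 where A0: "A0 > 0" "r1 > 0" "\<And>r. 0 < r \<Longrightarrow> r < r1 \<Longrightarrow> f r \<le> A0 / r ^ DIM('a)"
    using f_le_near_zero by blast
  define G where "G = A0 / R1 ^ DIM('a) + f r1"
  have G0: "A0 / R1 ^ DIM('a) \<ge> 0" "f r1 \<ge> 0" using A0 R1 f_pos[of r1] by auto
  have fb: "f (R1 / 2 ^ n) \<le> G * (2 ^ DIM('a)) ^ n" for n
  proof -
    have p1: "(1::real) \<le> (2 ^ DIM('a)) ^ n" by (simp add: one_le_power)
    have pos: "R1 / 2 ^ n > 0" using R1 by simp
    show ?thesis
    proof (cases "R1 / 2 ^ n < r1")
      case True
      have "f (R1 / 2 ^ n) \<le> A0 / (R1 / 2 ^ n) ^ DIM('a)" using A0(3)[OF pos True] .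
      also have "\<dots> = A0 / R1 ^ DIM('a) * (2 ^ DIM('a)) ^ n"
        using R1 by (simp add: power_divide field_simps power_mult[symmetric] mult.commute)
      also have "\<dots> \<le> G * (2 ^ DIM('a)) ^ n" unfolding G_def using G0 by (intro mult_right_mono) auto
      finally show ?thesis .
    next
      case False
      then have "f (R1 / 2 ^ n) \<le> f r1" using A0(2) by (intro f_mono) auto
      also have "\<dots> \<le> G * 1" unfolding G_def using G0 by simp
      also have "\<dots> \<le> G * (2 ^ DIM('a)) ^ n" using p1 G0 unfolding G_def by (intro mult_left_mono) auto
      finally show ?thesis .
    qed
  qed
  define B1 :: real where "B1 = 2 * max mass 1 * 2 ^ DIM('a)"
  have B1: "B1 \<ge> 1"
  proof -
    have "(1::real) \<le> 2 * max mass 1" by simp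
    then show ?thesis unfolding B1_def by (intro mult_ge1_I) (auto simp: one_le_power)
  qed
  have G00: "G \<ge> 0" unfolding G_def using G0 by simp
  have "conv_dens nu (Suc n) w \<le> (C0 * G) * B1 ^ n" if w: "R1 \<le> norm w" for n w
  proof -
    have "conv_dens nu (Suc n) w \<le> real (Suc n) * C0 * max mass 1 ^ n * f (R1 / 2 ^ n)"
      using conv_dens_le_f_scaled[OF R1 w] .
    also have "\<dots> \<le> 2 ^ n * C0 * max mass 1 ^ n * (G * (2 ^ DIM('a)) ^ n)"
    proof (intro mult_mono)
      show "real (Suc n) \<le> 2 ^ n" 
        by (metis Suc_leI less_exp of_nat_le_iff of_nat_numeral of_nat_power)
    qed (use C0_pos fb f_pos[of "R1 / 2 ^ n"] R1 G00 in auto)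
    also have "\<dots> = (C0 * G) * B1 ^ n" unfolding B1_def by (simp add: power_mult_distrib algebra_simps)
    finally show ?thesis .
  qed
  then show ?thesis using B1 G00 C0_pos by (intro exI[of _ "C0 * G"] exI[of _ B1]) auto
qed

text \<open>One convolution step far out: split according to which of \<open>y\<close>, \<open>x - y\<close> is within \<open>R\<close>
  of the origin; when neither is, the integrand is controlled by \<open>K(R)\<close>.\<close>

lemma conv_integrand_le_three_regions:
  assumes R: "R > 0" and x: "norm x - R \<ge> R"
    and IH: "\<And>w. R \<le> norm w \<Longrightarrow> conv_dens nu (Suc n) w \<le> c * f (norm w)" and c: "c \<ge> 0"
    and L: "f (norm x - R) \<le> L * f (norm x)"
  shows "conv_dens nu (Suc n) (x - y) * nu y
    \<le> c * L * f (norm x) * nu y + C0 * L * f (norm x) * conv_dens nu (Suc n) (x - y)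
       + c * C0 * (indicator {y. norm (x - y) > R \<and> norm y > R} y * (f (norm (x - y)) * f (norm y)))"
proof -
  have g0: "conv_dens nu (Suc n) (x - y) \<ge> 0" "nu y \<ge> 0" using conv_dens_nonneg nu_nonneg by auto
  have xR: "norm x - R > 0" using x R by simp
  have fx: "f (norm x) > 0" using xR R f_pos[of "norm x"] by linarith
  have "0 < L * f (norm x)" using L f_pos[OF xR] by linarith
  then have L0: "L \<ge> 0" using fx by (auto simp: zero_less_mult_iff)
  have ff: "0 \<le> indicator {y. norm (x - y) > R \<and> norm y > R} y * (f (norm (x - y)) * f (norm y))"
  proof (cases "norm (x - y) > R \<and> norm y > R")
    case True
    then have "f (norm (x - y)) > 0" "f (norm y) > 0"
      using R f_norm_pos[of R "x - y"] f_norm_pos[of R y] by auto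
    then show ?thesis by simp
  qed simp
  have rest: "0 \<le> c * L * f (norm x) * nu y" "0 \<le> C0 * L * f (norm x) * conv_dens nu (Suc n) (x - y)"
    "0 \<le> c * C0 * (indicator {y. norm (x - y) > R \<and> norm y > R} y * (f (norm (x - y)) * f (norm y)))"
    using g0 c L0 fx C0_pos ff by simp_all
  consider "norm y \<le> R" | "norm (x - y) \<le> R" | "norm (x - y) > R" "norm y > R" by linarith
  then show ?thesis
  proof cases
    case 1
    have d: "norm (x - y) \<ge> norm x - R" using norm_triangle_ineq2[of x y] 1 by simp
    have "conv_dens nu (Suc n) (x - y) \<le> c * f (norm (x - y))" using IH d x by auto
    also have "\<dots> \<le> c * (L * f (norm x))"
      using f_mono[OF xR d] L c by (intro mult_left_mono) auto
    finally have "conv_dens nu (Suc n) (x - y) * nu y \<le> c * (L * f (norm x)) * nu y"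
      using g0 by (intro mult_right_mono) auto
    then show ?thesis using rest by linarith
  next
    case 2
    have d: "norm y \<ge> norm x - R" using norm_triangle_ineq2[of x "x - y"] 2 by simp
    then have "y \<noteq> 0" using xR by auto
    then have "nu y \<le> C0 * f (norm y)" by (rule nu_le)
    also have "\<dots> \<le> C0 * (L * f (norm x))"
      using f_mono[OF xR d] L C0_pos by (intro mult_left_mono) auto
    finally have "conv_dens nu (Suc n) (x - y) * nu y \<le> conv_dens nu (Suc n) (x - y) * (C0 * (L * f (norm x)))"
      using g0 by (intro mult_left_mono) auto
    moreover have "conv_dens nu (Suc n) (x - y) * (C0 * (L * f (norm x))) = C0 * L * f (norm x) * conv_dens nu (Suc n) (x - y)"
      by (simp add: ac_simps)
    ultimately show ?thesis using rest by linarith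
  next
    case 3
    then have "y \<noteq> 0" using R by auto
    then have "conv_dens nu (Suc n) (x - y) * nu y \<le> (c * f (norm (x - y))) * (C0 * f (norm y))"
      using IH[of "x - y"] nu_le[of y] 3 g0 by (intro mult_mono) auto
    then show ?thesis using 3 rest by (simp add: algebra_simps)
  qed
qed

lemma conv_dens_Suc_Suc_far_le:
  assumes R1: "R \<ge> 1" and x: "norm x - R \<ge> R"
    and IH: "\<And>w. R \<le> norm w \<Longrightarrow> conv_dens nu (Suc n) w \<le> c * f (norm w)" and c: "c \<ge> 0"
    and L: "f (norm x - R) \<le> L * f (norm x)" and K: "K_fun TYPE('a) f R \<le> 1"
  shows "conv_dens nu (Suc (Suc n)) x \<le> (c * L * mass + C0 * L * mass ^ Suc n + c * C0) * f (norm x)"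
proof -
  let ?S = "{y. norm (x - y) > R \<and> norm y > R}"
  have R: "R > 0" using R1 by simp
  have xR: "norm x - R > 0" using x R by simp
  have fx: "f (norm x) > 0" using xR R f_pos[of "norm x"] by linarith
  have "0 < L * f (norm x)" using L f_pos[OF xR] by linarith
  then have L0: "L \<ge> 0" using fx by (auto simp: zero_less_mult_iff)
  define P1 where "P1 = c * L * f (norm x)"
  define P2 where "P2 = C0 * L * f (norm x)"
  have P: "P1 \<ge> 0" "P2 \<ge> 0" "c * C0 \<ge> 0" unfolding P1_def P2_def using c L0 fx C0_pos by auto
  have "(\<integral>\<^sup>+y. ennreal (conv_dens nu (Suc n) (x - y) * nu y) \<partial>lborel)
      \<le> (\<integral>\<^sup>+y. ennreal (P1 * nu y + P2 * conv_dens nu (Suc n) (x - y)) +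
          ennreal (c * C0) * (indicator ?S y * ennreal (f (norm (x - y)) * f (norm y))) \<partial>lborel)"
  proof (intro nn_integral_mono)
    fix y
    let ?a = "P1 * nu y + P2 * conv_dens nu (Suc n) (x - y)"
    have a: "?a \<ge> 0" using P nu_nonneg conv_dens_nonneg by simp
    have bound: "conv_dens nu (Suc n) (x - y) * nu y \<le> ?a + c * C0 * (indicator ?S y * (f (norm (x - y)) * f (norm y)))"
      using conv_integrand_le_three_regions[OF R x IH c L, of y] unfolding P1_def P2_def by simp
    show "ennreal (conv_dens nu (Suc n) (x - y) * nu y)
        \<le> ennreal ?a + ennreal (c * C0) * (indicator ?S y * ennreal (f (norm (x - y)) * f (norm y)))"
    proof (cases "y \<in> ?S")
      case True
      then have "f (norm (x - y)) > 0" "f (norm y) > 0"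
        using R f_norm_pos[of R "x - y"] f_norm_pos[of R y] by auto
      then show ?thesis using True a P bound
        by (simp add: ennreal_mult[symmetric] ennreal_plus[symmetric] ennreal_leI del: ennreal_plus)
    next
      case False
      then show ?thesis using bound a by (simp add: ennreal_leI)
    qed
  qed
  also have "\<dots> = ennreal (P1 * mass + P2 * mass ^ Suc n) +
      ennreal (c * C0) * (\<integral>\<^sup>+y. indicator ?S y * ennreal (f (norm (x - y)) * f (norm y)) \<partial>lborel)"
    using P by (simp add: nn_integral_add nn_integral_cmult nn_integral_nu_conv_dens_comb)
  also have "\<dots> \<le> ennreal (P1 * mass + P2 * mass ^ Suc n) + ennreal (c * C0) * (1 * ennreal (f (norm x)))"
    using nn_integral_K_bound[of x R] K x R1
    by (intro add_mono mult_left_mono order_trans[OF _ mult_right_mono[OF K]]) auto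
  also have "\<dots> = ennreal (P1 * mass + P2 * mass ^ Suc n + c * C0 * f (norm x))"
    using P fx mass_nonneg by (simp add: ennreal_mult[symmetric] ennreal_plus[symmetric] del: ennreal_plus)
  finally have "conv_dens nu (Suc (Suc n)) x \<le> P1 * mass + P2 * mass ^ Suc n + c * C0 * f (norm x)"
    using P fx mass_nonneg by (intro conv_dens_Suc_Suc_le) auto
  then show ?thesis unfolding P1_def P2_def by (simp add: algebra_simps)
qed

text \<open>A bound \<open>A B^(n+1) f(|w|)\<close> on the shell \<open>R1 \<le> |w| \<le> T\<close> propagates to all \<open>|w| \<ge> R1\<close>,
  since one convolution step far out multiplies the constant by at most \<open>B\<close>.\<close>

lemma conv_dens_le_f_propagate:
  assumes R1: "R1 \<ge> 1" "K_fun TYPE('a) f R1 \<le> 1" and T: "T \<ge> 2 * R1"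
    and L: "L \<ge> 0" "\<And>u. u > T \<Longrightarrow> f (u - R1) \<le> L * f u"
    and A: "A \<ge> 1" and B: "B \<ge> max mass 1" "B \<ge> L * mass + C0 * L + C0"
    and shell: "\<And>n w. R1 \<le> norm w \<Longrightarrow> norm w \<le> T \<Longrightarrow> conv_dens nu (Suc n) w \<le> A * B ^ Suc n * f (norm w)"
    and w: "R1 \<le> norm w"
  shows "conv_dens nu (Suc n) w \<le> A * B ^ Suc n * f (norm w)"
  using w
proof (induction n arbitrary: w)
  case 0
  then have "w \<noteq> 0" using R1 by auto
  then have "nu w \<le> C0 * f (norm w)" by (rule nu_le)
  also have "\<dots> \<le> (A * B) * f (norm w)"
  proof (rule mult_right_mono)
    have "0 \<le> L * mass" "0 \<le> C0 * L" using L(1) mass_nonneg C0_pos by simp_all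
    then show "C0 \<le> A * B" using B mult_right_mono[OF A, of B] by linarith
    show "0 \<le> f (norm w)" using f_norm_pos[of 0 w] \<open>w \<noteq> 0\<close> by simp
  qed
  finally show ?case by simp
next
  case (Suc n x)
  define c where "c = A * B ^ Suc n"
  have B1: "B \<ge> 1" using B(1) by linarith
  have c: "c \<ge> 1" unfolding c_def using A B1 by (simp add: one_le_power mult_ge1_I)
  show ?case
  proof (cases "norm x \<le> T")
    case False
    have fx: "f (norm x) > 0" using Suc.prems R1 f_norm_pos[of 0 x] by linarith
    have xR: "norm x - R1 \<ge> R1" using False T by simp
    have Lx: "f (norm x - R1) \<le> L * f (norm x)" using L(2) False by simp
    have IH: "\<And>w. R1 \<le> norm w \<Longrightarrow> conv_dens nu (Suc n) w \<le> c * f (norm w)"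
      unfolding c_def by (rule Suc.IH)
    have c0: "c \<ge> 0" using c by simp
    note far = conv_dens_Suc_Suc_far_le[OF R1(1) xR IH c0 Lx R1(2)]
    have "mass ^ Suc n \<le> B ^ Suc n" using mass_nonneg B(1) by (intro power_mono) auto
    also have "\<dots> \<le> c" unfolding c_def using A B1 by simp
    finally have "C0 * L * mass ^ Suc n \<le> C0 * L * c" using C0_pos L(1) by (intro mult_left_mono) auto
    then have "c * L * mass + C0 * L * mass ^ Suc n + c * C0 \<le> c * (L * mass + C0 * L + C0)"
      by (simp add: algebra_simps)
    also have "\<dots> \<le> c * B" using B(2) c by (intro mult_left_mono) auto
    finally have le: "c * L * mass + C0 * L * mass ^ Suc n + c * C0 \<le> c * B" .
    have "conv_dens nu (Suc (Suc n)) x \<le> c * B * f (norm x)"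
      using far mult_right_mono[OF le, of "f (norm x)"] fx by linarith
    then show ?thesis unfolding c_def by (simp add: algebra_simps)
  next
    case True
    show ?thesis using shell[OF Suc.prems True, of "Suc n"] .
  qed
qed

lemma conv_dens_le_f:
  "\<exists>R1 A B. R1 \<ge> 1 \<and> A \<ge> 1 \<and> B \<ge> 1 \<and> K_fun TYPE('a) f R1 < 1 \<and>
     (\<forall>n w. R1 \<le> norm w \<longrightarrow> conv_dens nu (Suc n) w \<le> A * B ^ Suc n * f (norm w))"
proof -
  have "eventually (\<lambda>R. K_fun TYPE('a) f R < 1) at_top"
    using K_lim by (rule order_tendstoD) simp
  then obtain R1 where R1: "R1 \<ge> 1" "K_fun TYPE('a) f R1 < 1"
    by (metis eventually_at_top_linorder max.cobounded1 max.cobounded2)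
  obtain L S where LS: "L > 0" "S > R1" "\<And>u. u \<ge> S \<Longrightarrow> f (u - R1) \<le> L * f u"
    using f_shift_le[of R1] R1 by auto
  obtain F0 B1 where FB: "F0 \<ge> 0" "B1 \<ge> 1" "\<And>n w. R1 \<le> norm w \<Longrightarrow> conv_dens nu (Suc n) w \<le> F0 * B1 ^ n"
    using conv_dens_le_geometric[of R1] R1 by auto
  define T where "T = max S (2 * R1)"
  have T: "T \<ge> S" "T \<ge> 2 * R1" "T > 0" unfolding T_def using R1 by auto
  have fT: "f T > 0" using f_pos T by simp
  define A where "A = max 1 (F0 / f T)"
  define B where "B = B1 + max mass 1 + L * mass + C0 * L + C0"
  have "F0 / f T \<le> A" unfolding A_def by simp
  then have "F0 \<le> A * f T" using fT by (simp add: pos_divide_le_eq)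
  moreover have "A \<ge> 1" unfolding A_def by simp
  ultimately have A: "A \<ge> 1" "F0 \<le> A * f T" by simp_all
  have "L * mass \<ge> 0" "C0 * L \<ge> 0" using mass_nonneg LS C0_pos by auto
  then have B: "B \<ge> B1" "B \<ge> max mass 1" "B \<ge> L * mass + C0 * L + C0"
    unfolding B_def using FB(2) C0_pos by auto
  have shell: "conv_dens nu (Suc n) w \<le> A * B ^ Suc n * f (norm w)" if w: "R1 \<le> norm w" "norm w \<le> T" for n w
  proof -
    have "f T \<le> f (norm w)" using w R1 by (intro f_mono) auto
    then have "F0 \<le> A * f (norm w)" using A mult_left_mono[of "f T" "f (norm w)" A] by linarith
    moreover have "B1 ^ n \<le> B ^ Suc n"
    proof -
      have "B1 ^ n \<le> B ^ n" using B(1) FB(2) by (intro power_mono) auto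
      also have "\<dots> \<le> B ^ Suc n" using B(2) by (intro power_increasing) auto
      finally show ?thesis .
    qed
    ultimately have "F0 * B1 ^ n \<le> A * f (norm w) * B ^ Suc n"
      using FB(1,2) A(1) f_norm_pos[of 0 w] w R1 by (intro mult_mono) auto
    then show ?thesis using FB(3)[OF w(1), of n] by (simp add: algebra_simps)
  qed
  have far: "f (u - R1) \<le> L * f u" if "u > T" for u using LS(3) T(1) that by simp
  have "conv_dens nu (Suc n) w \<le> A * B ^ Suc n * f (norm w)" if "R1 \<le> norm w" for n w
    using conv_dens_le_f_propagate[OF R1(1) less_imp_le[OF R1(2)] T(2) less_imp_le[OF LS(1)] far A(1) B(2,3) shell that] .
  moreover have "B \<ge> 1" using B(2) by linarith
  ultimately show ?thesis using R1 A by blast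
qed

lemma nn_integral_ray_ratio_le_K:
  assumes th: "\<theta> \<in> E" and R: "R > 0" and s: "s > 1"
  shows "(\<integral>\<^sup>+w. indicator {w. norm (s *\<^sub>R \<theta> - w) > R \<and> norm w > R} w *
      ennreal (nu (s *\<^sub>R \<theta> - w) / nu (s *\<^sub>R \<theta>) * f (norm w)) \<partial>lborel)
    \<le> ennreal (C0 / cone_const) * K_fun TYPE('a) f R"
proof -
  let ?x = "s *\<^sub>R \<theta>"
  let ?S = "{w. norm (?x - w) > R \<and> norm w > R}"
  have nx: "norm ?x = s" using norm_dir[OF th] s by simp
  have fs: "f s > 0" using f_pos s by simp
  have nux: "nu ?x \<ge> cone_const * f s" using nu_ray_lower[OF th] s by simp
  have pw: "indicator ?S w * ennreal (nu (?x - w) / nu ?x * f (norm w))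
      \<le> ennreal (C0 / (cone_const * f s)) * (indicator ?S w * ennreal (f (norm (?x - w)) * f (norm w)))" for w
  proof (cases "w \<in> ?S")
    case True
    then have w0: "?x - w \<noteq> 0" using R by auto
    have fw: "f (norm w) > 0" "f (norm (?x - w)) > 0" using True R f_norm_pos[of R w] f_norm_pos[of R "?x - w"] by auto
    have "nu (?x - w) / nu ?x \<le> C0 * f (norm (?x - w)) / (cone_const * f s)"
      using nu_le[OF w0] nux C0_pos cone_const_pos fs fw by (intro frac_le) auto
    then have "nu (?x - w) / nu ?x * f (norm w) \<le> C0 * f (norm (?x - w)) / (cone_const * f s) * f (norm w)"
      using fw by (intro mult_right_mono) auto
    then have "nu (?x - w) / nu ?x * f (norm w) \<le> C0 / (cone_const * f s) * (f (norm (?x - w)) * f (norm w))"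
      by simp
    then show ?thesis using True fw C0_pos cone_const_pos fs
      by (simp add: ennreal_mult[symmetric] ennreal_leI)
  qed simp
  have "(\<integral>\<^sup>+w. indicator ?S w * ennreal (nu (?x - w) / nu ?x * f (norm w)) \<partial>lborel)
      \<le> (\<integral>\<^sup>+w. ennreal (C0 / (cone_const * f s)) * (indicator ?S w * ennreal (f (norm (?x - w)) * f (norm w))) \<partial>lborel)"
    by (intro nn_integral_mono pw)
  also have "\<dots> = ennreal (C0 / (cone_const * f s)) * (\<integral>\<^sup>+w. indicator ?S w * ennreal (f (norm (?x - w)) * f (norm w)) \<partial>lborel)"
    by (rule nn_integral_cmult) measurable
  also have "\<dots> \<le> ennreal (C0 / (cone_const * f s)) * (K_fun TYPE('a) f R * ennreal (f s))"
    using nn_integral_K_bound[of ?x R] nx s by (intro mult_left_mono) auto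
  also have "\<dots> = K_fun TYPE('a) f R * (ennreal (C0 / (cone_const * f s)) * ennreal (f s))"
    by (simp add: ac_simps)
  also have "ennreal (C0 / (cone_const * f s)) * ennreal (f s) = ennreal (C0 / cone_const)"
    using C0_pos cone_const_pos fs by (simp add: ennreal_mult[symmetric])
  finally show ?thesis by (simp add: mult.commute)
qed

text \<open>Fatou's lemma along the ray \<open>n \<theta>\<close>, with the ratio limit (C) inside the integral.\<close>

lemma nn_integral_tail_tilted_f_le_K:
  assumes th: "\<theta> \<in> E" and R: "R > 0"
  shows "(\<integral>\<^sup>+w. indicator {w. norm w > R} w * ennreal (exp (\<kappa> * (\<theta> \<bullet> w)) * f (norm w)) \<partial>lborel)
     \<le> ennreal (C0 / cone_const) * K_fun TYPE('a) f R"
proof -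
  define u where "u n w = indicator {w. norm (real n *\<^sub>R \<theta> - w) > R \<and> norm w > R} w *
     ennreal (nu (real n *\<^sub>R \<theta> - w) / nu (real n *\<^sub>R \<theta>) * f (norm w))" for n w
  have lim: "(\<lambda>n. u n w) \<longlonglongrightarrow> indicator {w. norm w > R} w * ennreal (exp (\<kappa> * (\<theta> \<bullet> w)) * f (norm w))" for w
  proof (cases "norm w > R")
    case True
    have "eventually (\<lambda>n. real n > R + norm w) sequentially"
      using filterlim_real_sequentially unfolding filterlim_at_top_dense by blast
    then have ev: "eventually (\<lambda>n. norm (real n *\<^sub>R \<theta> - w) > R) sequentially"
    proof eventually_elim
      case (elim n)
      moreover have "norm (real n *\<^sub>R \<theta> - w) \<ge> norm (real n *\<^sub>R \<theta>) - norm w" by (rule norm_triangle_ineq2)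
      ultimately show ?case using norm_dir[OF th] by simp
    qed
    have "(\<lambda>n. nu (real n *\<^sub>R \<theta> - w) / nu (real n *\<^sub>R \<theta>)) \<longlonglongrightarrow> exp (\<kappa> * (\<theta> \<bullet> w))"
      using filterlim_compose[OF C_lim[OF th, of w] filterlim_real_sequentially] by simp
    then have "(\<lambda>n. ennreal (nu (real n *\<^sub>R \<theta> - w) / nu (real n *\<^sub>R \<theta>) * f (norm w)))
        \<longlonglongrightarrow> ennreal (exp (\<kappa> * (\<theta> \<bullet> w)) * f (norm w))"
      by (intro tendsto_ennrealI tendsto_mult_right)
    moreover have "eventually (\<lambda>n. ennreal (nu (real n *\<^sub>R \<theta> - w) / nu (real n *\<^sub>R \<theta>) * f (norm w)) = u n w) sequentially"
      using ev by eventually_elim (use True in \<open>simp add: u_def\<close>)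
    ultimately show ?thesis using True by (simp add: tendsto_cong)
  qed (simp add: u_def)
  have "(\<integral>\<^sup>+w. indicator {w. norm w > R} w * ennreal (exp (\<kappa> * (\<theta> \<bullet> w)) * f (norm w)) \<partial>lborel)
      = (\<integral>\<^sup>+w. liminf (\<lambda>n. u n w) \<partial>lborel)"
    by (intro nn_integral_cong) (rule lim_imp_Liminf[symmetric, OF _ lim], simp)
  also have "\<dots> \<le> liminf (\<lambda>n. \<integral>\<^sup>+w. u n w \<partial>lborel)"
    by (rule nn_integral_liminf) (simp add: u_def)
  also have "\<dots> \<le> ennreal (C0 / cone_const) * K_fun TYPE('a) f R"
    unfolding u_def using nn_integral_ray_ratio_le_K[OF th R]
    by (intro Liminf_le) (auto simp: eventually_sequentially intro!: exI[of _ 2])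
  finally show ?thesis .
qed

lemma f_near_ray_le_nu:
  assumes "\<rho> \<ge> 0"
  obtains L S where "L > 0" "S > \<rho>"
    "\<And>s \<theta> w. s \<ge> S \<Longrightarrow> \<theta> \<in> E \<Longrightarrow> norm (w - s *\<^sub>R \<theta>) \<le> \<rho> \<Longrightarrow> f (norm w) \<le> L * nu (s *\<^sub>R \<theta>)"
proof -
  obtain L0 S where LS: "L0 > 0" "S > \<rho>" "\<And>u. u \<ge> S \<Longrightarrow> f (u - \<rho>) \<le> L0 * f u"
    using f_shift_le[OF assms] by auto
  have "f (norm w) \<le> (L0 / cone_const) * nu (s *\<^sub>R \<theta>)"
    if s: "s \<ge> S" and th: "\<theta> \<in> E" and w: "norm (w - s *\<^sub>R \<theta>) \<le> \<rho>" for s \<theta> w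
  proof -
    have sp: "s > 0" "s - \<rho> > 0" using s LS assms by auto
    have "s \<le> norm w + norm (w - s *\<^sub>R \<theta>)"
      using norm_triangle_ineq[of w "s *\<^sub>R \<theta> - w"] norm_dir[OF th] sp by (simp add: norm_minus_commute)
    then have d: "norm w \<ge> s - \<rho>" using w by simp
    have "f (norm w) \<le> f (s - \<rho>)" using f_mono[OF sp(2) d] .
    also have "\<dots> \<le> L0 * f s" using LS(3) s by simp
    also have "\<dots> \<le> L0 * (nu (s *\<^sub>R \<theta>) / cone_const)"
      using nu_ray_lower[OF th sp(1)] cone_const_pos LS(1) by (intro mult_left_mono) (auto simp: field_simps)
    finally show ?thesis by simp
  qed
  then show ?thesis using LS cone_const_pos by (intro that[of "L0 / cone_const" S]) auto
qed

end

section \<open>Asymptotics of the convolution powers along the rays of \<open>E\<close>\<close>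

locale sharp_bound = levy_conditions nu f C0 E \<kappa> for nu :: "'a::euclidean_space \<Rightarrow> real" and f C0 E \<kappa> +
  fixes R1 A B :: real
  assumes R1_ge: "R1 \<ge> 1" and A_ge: "A \<ge> 1" and B_ge: "B \<ge> 1"
    and K_R1: "K_fun TYPE('a) f R1 < 1"
    and conv_dens_le: "\<And>n w. R1 \<le> norm w \<Longrightarrow> conv_dens nu (Suc n) w \<le> A * B ^ Suc n * f (norm w)"
begin

abbreviation tilt :: "'a \<Rightarrow> 'a \<Rightarrow> real" where "tilt \<theta> z \<equiv> exp (\<kappa> * (\<theta> \<bullet> z))"

lemma tilt_diff: "tilt \<theta> x = tilt \<theta> (x - y) * tilt \<theta> y"
  by (simp add: inner_diff_right algebra_simps exp_add[symmetric])

lemma tilt_add: "tilt \<theta> (y + z) = tilt \<theta> y * tilt \<theta> z"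
  by (simp add: inner_add_right algebra_simps exp_add[symmetric])

lemma tilt_le: assumes "\<theta> \<in> E" "norm z \<le> r" shows "tilt \<theta> z \<le> exp (\<kappa> * r)"
proof -
  have "\<theta> \<bullet> z \<le> norm \<theta> * norm z" by (rule norm_cauchy_schwarz)
  then have "\<theta> \<bullet> z \<le> r" using norm_dir[OF assms(1)] assms(2) by simp
  then show ?thesis using \<kappa>_nonneg by (simp add: mult_left_mono)
qed

definition K_real :: "real \<Rightarrow> real" where "K_real R = enn2real (K_fun TYPE('a) f R)"

lemma K_real_bounds: assumes "R \<ge> R1"
  shows "K_fun TYPE('a) f R = ennreal (K_real R)" "K_real R \<ge> 0" "K_real R \<le> 1"
proof -
  have "K_fun TYPE('a) f R \<le> K_fun TYPE('a) f R1" using K_mono[of R1 R] assms R1_ge by simp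
  then have lt: "K_fun TYPE('a) f R < 1" using K_R1 by simp
  then have "K_fun TYPE('a) f R \<noteq> \<infinity>" by (auto simp: top_unique)
  then show eq: "K_fun TYPE('a) f R = ennreal (K_real R)"
    unfolding K_real_def by (simp add: ennreal_enn2real less_top)
  show "K_real R \<ge> 0" unfolding K_real_def by simp
  show "K_real R \<le> 1" using lt eq by (metis ennreal_le_1 less_imp_le)
qed

lemma K_real_tendsto: "(K_real \<longlongrightarrow> 0) at_top"
  unfolding K_real_def using tendsto_enn2real[of "K_fun TYPE('a) f" 0] K_lim by simp

lemma tail_tilted_le_K:
  fixes g :: "'a \<Rightarrow> real"
  assumes th: "\<theta> \<in> E" and R: "R \<ge> R1"
    and [measurable]: "g \<in> borel_measurable borel" and g0: "\<And>w. g w \<ge> 0"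
    and G: "G \<ge> 0" and g_le: "\<And>w. norm w > R \<Longrightarrow> g w \<le> G * f (norm w)"
  shows "integrable lborel (\<lambda>w. indicator {w. norm w > R} w * (g w * tilt \<theta> w))"
    "(LINT w|lborel. indicator {w. norm w > R} w * (g w * tilt \<theta> w)) \<le> G * (C0 / cone_const) * K_real R"
proof -
  have R0: "R > 0" using R R1_ge by simp
  have "(\<integral>\<^sup>+w. ennreal (indicator {w. norm w > R} w * (g w * tilt \<theta> w)) \<partial>lborel)
     \<le> (\<integral>\<^sup>+w. ennreal G * (indicator {w. norm w > R} w * ennreal (tilt \<theta> w * f (norm w))) \<partial>lborel)"
  proof (intro nn_integral_mono)
    fix w show "ennreal (indicator {w. norm w > R} w * (g w * tilt \<theta> w))
        \<le> ennreal G * (indicator {w. norm w > R} w * ennreal (tilt \<theta> w * f (norm w)))"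
    proof (cases "norm w > R")
      case True
      then have "g w * tilt \<theta> w \<le> G * (tilt \<theta> w * f (norm w))"
        using g_le[of w] by (simp add: algebra_simps)
      moreover have "f (norm w) > 0" using True R0 f_norm_pos[of R w] by simp
      ultimately show ?thesis using True G by (simp add: ennreal_mult[symmetric] ennreal_leI)
    qed simp
  qed
  also have "\<dots> = ennreal G * (\<integral>\<^sup>+w. indicator {w. norm w > R} w * ennreal (tilt \<theta> w * f (norm w)) \<partial>lborel)"
    by (rule nn_integral_cmult) measurable
  also have "\<dots> \<le> ennreal G * (ennreal (C0 / cone_const) * K_fun TYPE('a) f R)"
    using nn_integral_tail_tilted_f_le_K[OF th R0] by (intro mult_left_mono) auto
  also have "\<dots> = ennreal (G * (C0 / cone_const) * K_real R)"
    using K_real_bounds[OF R] C0_pos cone_const_pos G by (simp add: ennreal_mult[symmetric] mult.assoc)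
  finally have nn: "(\<integral>\<^sup>+w. ennreal (indicator {w. norm w > R} w * (g w * tilt \<theta> w)) \<partial>lborel)
      \<le> ennreal (G * (C0 / cone_const) * K_real R)" .
  have "G * (C0 / cone_const) * K_real R \<ge> 0" using K_real_bounds[OF R] C0_pos cone_const_pos G by simp
  then show "integrable lborel (\<lambda>w. indicator {w. norm w > R} w * (g w * tilt \<theta> w))"
    "(LINT w|lborel. indicator {w. norm w > R} w * (g w * tilt \<theta> w)) \<le> G * (C0 / cone_const) * K_real R"
    using integral_le_of_nn_integral_le[OF _ _ nn] g0 by auto
qed

lemma tail_tilted_nu_le_K:
  assumes "\<theta> \<in> E" "R \<ge> R1"
  shows "integrable lborel (\<lambda>w. indicator {w. norm w > R} w * (nu w * tilt \<theta> w))"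
    "(LINT w|lborel. indicator {w. norm w > R} w * (nu w * tilt \<theta> w)) \<le> C0 * (C0 / cone_const) * K_real R"
proof -
  have "nu w \<le> C0 * f (norm w)" if "norm w > R" for w
    using nu_le[of w] that assms(2) R1_ge by fastforce
  note tail = tail_tilted_le_K[OF assms nu_borel nu_nonneg less_imp_le[OF C0_pos] this]
  then show "integrable lborel (\<lambda>w. indicator {w. norm w > R} w * (nu w * tilt \<theta> w))"
    "(LINT w|lborel. indicator {w. norm w > R} w * (nu w * tilt \<theta> w)) \<le> C0 * (C0 / cone_const) * K_real R"
    by simp_all
qed

lemma tail_tilted_conv_dens_le_K:
  assumes "\<theta> \<in> E" "R \<ge> R1"
  shows "integrable lborel (\<lambda>w. indicator {w. norm w > R} w * (conv_dens nu (Suc n) w * tilt \<theta> w))"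
    "(LINT w|lborel. indicator {w. norm w > R} w * (conv_dens nu (Suc n) w * tilt \<theta> w))
      \<le> A * B ^ Suc n * (C0 / cone_const) * K_real R"
  using tail_tilted_le_K[OF assms conv_dens_measurable conv_dens_nonneg, of "A * B ^ Suc n"]
    assms(2) A_ge B_ge conv_dens_le by auto

definition tilted_mass :: "'a \<Rightarrow> real" where "tilted_mass \<theta> = (LINT z|lborel. tilt \<theta> z * nu z)"

definition tilted_mass_bound :: real where "tilted_mass_bound = exp (\<kappa> * R1) * mass + C0 * (C0 / cone_const)"

lemma tilted_mass_bound_nonneg: "tilted_mass_bound \<ge> 0"
  unfolding tilted_mass_bound_def using mass_nonneg C0_pos cone_const_pos by simp

lemma near_tilted_nu_le:
  assumes "\<theta> \<in> E"
  shows "\<bar>indicator (cball 0 R1) z * (tilt \<theta> z * nu z)\<bar> \<le> exp (\<kappa> * R1) * nu z"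
  using tilt_le[OF assms, of z R1] nu_nonneg[of z] by (auto simp: indicator_def intro: mult_right_mono)

lemma integrable_tilted_nu:
  assumes th: "\<theta> \<in> E"
  shows "integrable lborel (\<lambda>z. tilt \<theta> z * nu z)"
proof -
  have "integrable lborel (\<lambda>z. indicator (cball 0 R1) z * (tilt \<theta> z * nu z))"
  proof (rule Bochner_Integration.integrable_bound)
    show "integrable lborel (\<lambda>z. exp (\<kappa> * R1) * nu z)" using nu_finite by simp
    show "(\<lambda>z. indicator (cball 0 R1) z * (tilt \<theta> z * nu z)) \<in> borel_measurable lborel" by measurable
    show "AE z in lborel. norm (indicator (cball 0 R1) z * (tilt \<theta> z * nu z)) \<le> norm (exp (\<kappa> * R1) * nu z)"
      using near_tilted_nu_le[OF th] by (intro AE_I2) (auto intro: order_trans abs_ge_self)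
  qed
  moreover have "integrable lborel (\<lambda>z. indicator {w. norm w > R1} z * (tilt \<theta> z * nu z))"
    using tail_tilted_nu_le_K(1)[OF th order_refl] by (simp add: mult.commute)
  ultimately have "integrable lborel (\<lambda>z. indicator (cball 0 R1) z * (tilt \<theta> z * nu z)
      + indicator {w. norm w > R1} z * (tilt \<theta> z * nu z))" by simp
  moreover have "(\<lambda>z. indicator (cball 0 R1) z * (tilt \<theta> z * nu z) + indicator {w. norm w > R1} z * (tilt \<theta> z * nu z))
      = (\<lambda>z. tilt \<theta> z * nu z)"
    by (auto simp: indicator_def fun_eq_iff)
  ultimately show ?thesis by simp
qed

lemma tilted_mass_bounds: assumes th: "\<theta> \<in> E" shows "0 \<le> tilted_mass \<theta>" "tilted_mass \<theta> \<le> tilted_mass_bound"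
proof -
  show "0 \<le> tilted_mass \<theta>" unfolding tilted_mass_def using nu_nonneg by (simp add: integral_nonneg_AE)
  have "(LINT z|lborel. indicator (cball 0 R1) z * (tilt \<theta> z * nu z)) \<le> (LINT z|lborel. exp (\<kappa> * R1) * nu z)"
    using integrable_indicator_times[OF _ integrable_tilted_nu[OF th], of "cball 0 R1"] nu_finite
      near_tilted_nu_le[OF th] by (intro integral_mono) (auto simp: abs_le_iff)
  moreover have "(LINT z|lborel. indicator {w. norm w > R1} z * (tilt \<theta> z * nu z)) \<le> C0 * (C0 / cone_const)"
  proof -
    have "C0 * (C0 / cone_const) * K_real R1 \<le> C0 * (C0 / cone_const)"
      using K_real_bounds[OF order_refl] C0_pos cone_const_pos by (intro mult_left_le) auto
    then show ?thesis
      using tail_tilted_nu_le_K(2)[OF th order_refl] by (simp add: mult.commute[of "nu _"])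
  qed
  ultimately show "tilted_mass \<theta> \<le> tilted_mass_bound"
    unfolding tilted_mass_def tilted_mass_bound_def total_mass_def
    by (simp add: integral_split_cball[OF integrable_tilted_nu[OF th], of R1])
qed

lemma nn_integral_tilted_nu:
  "\<theta> \<in> E \<Longrightarrow> (\<integral>\<^sup>+z. ennreal (nu z * tilt \<theta> z) \<partial>lborel) = ennreal (tilted_mass \<theta>)"
  unfolding tilted_mass_def using integrable_tilted_nu[of \<theta>] nu_nonneg
  by (subst nn_integral_eq_integral) (auto simp: mult.commute)

lemma conv_dens_tilted:
  assumes th: "\<theta> \<in> E"
  shows "integrable lborel (\<lambda>x. conv_dens nu (Suc n) x * tilt \<theta> x)"
    and "(LINT x|lborel. conv_dens nu (Suc n) x * tilt \<theta> x) = tilted_mass \<theta> ^ Suc n"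
proof -
  have nn: "(\<integral>\<^sup>+x. ennreal (conv_dens nu (Suc n) x * tilt \<theta> x) \<partial>lborel) = ennreal (tilted_mass \<theta> ^ Suc n)"
    using nn_integral_conv_dens_multiplicative[of "tilt \<theta>" n] tilt_diff[of \<theta>] nn_integral_tilted_nu[OF th]
      tilted_mass_bounds[OF th] by (simp add: ennreal_power ennreal_mult[symmetric])
  show "integrable lborel (\<lambda>x. conv_dens nu (Suc n) x * tilt \<theta> x)"
    using nn by (intro integrableI_nonneg) (auto simp: conv_dens_nonneg)
  show "(LINT x|lborel. conv_dens nu (Suc n) x * tilt \<theta> x) = tilted_mass \<theta> ^ Suc n"
    using tilted_mass_bounds[OF th] by (subst integral_eq_nn_integral) (auto simp: conv_dens_nonneg nn)
qed

lemma conv_remainder_le_K: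
  assumes R: "R \<ge> R1" and x: "norm x > 2 * R"
  defines "S \<equiv> {z. norm (x - z) > R \<and> norm z > R}"
  shows "integrable lborel (\<lambda>z. indicator S z * (conv_dens nu (Suc n) (x - z) * nu z))"
    "(LINT z|lborel. indicator S z * (conv_dens nu (Suc n) (x - z) * nu z)) \<le> A * B ^ Suc n * C0 * K_real R * f (norm x)"
proof -
  define G where "G = A * B ^ Suc n * C0"
  have G0: "G \<ge> 0" unfolding G_def using A_ge B_ge C0_pos by simp
  have R0: "R > 0" using R R1_ge by simp
  have fx: "f (norm x) > 0" using x R0 f_norm_pos[of R x] by simp
  have "(\<integral>\<^sup>+z. ennreal (indicator S z * (conv_dens nu (Suc n) (x - z) * nu z)) \<partial>lborel)
      \<le> (\<integral>\<^sup>+z. ennreal G * (indicator S z * ennreal (f (norm (x - z)) * f (norm z))) \<partial>lborel)"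
  proof (intro nn_integral_mono)
    fix z show "ennreal (indicator S z * (conv_dens nu (Suc n) (x - z) * nu z))
        \<le> ennreal G * (indicator S z * ennreal (f (norm (x - z)) * f (norm z)))"
    proof (cases "z \<in> S")
      case True
      then have zz: "norm (x - z) > R" "norm z > R" unfolding S_def by auto
      then have "z \<noteq> 0" using R0 by auto
      moreover have f0: "f (norm (x - z)) > 0" "f (norm z) > 0"
        using zz R0 f_norm_pos[of R "x - z"] f_norm_pos[of R z] by auto
      ultimately have "conv_dens nu (Suc n) (x - z) * nu z \<le> (A * B ^ Suc n * f (norm (x - z))) * (C0 * f (norm z))"
        using conv_dens_le[of "x - z" n] nu_le[of z] zz R conv_dens_nonneg nu_nonneg A_ge B_ge
        by (intro mult_mono) auto
      then have le: "conv_dens nu (Suc n) (x - z) * nu z \<le> G * (f (norm (x - z)) * f (norm z))"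
        unfolding G_def by (simp add: algebra_simps)
      have "ennreal G * ennreal (f (norm (x - z)) * f (norm z)) = ennreal (G * (f (norm (x - z)) * f (norm z)))"
        using G0 f0 by (simp add: ennreal_mult)
      then show ?thesis using True le by (simp add: ennreal_leI)
    qed simp
  qed
  also have "\<dots> = ennreal G * (\<integral>\<^sup>+z. indicator S z * ennreal (f (norm (x - z)) * f (norm z)) \<partial>lborel)"
    unfolding S_def by (rule nn_integral_cmult) measurable
  also have "\<dots> \<le> ennreal G * (K_fun TYPE('a) f R * ennreal (f (norm x)))"
    unfolding S_def using nn_integral_K_bound[of x R] x R R1_ge by (intro mult_left_mono) auto
  also have "\<dots> = ennreal (G * K_real R * f (norm x))"
    using K_real_bounds[OF R] G0 fx by (simp add: ennreal_mult[symmetric] mult.assoc)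
  finally have nn: "(\<integral>\<^sup>+z. ennreal (indicator S z * (conv_dens nu (Suc n) (x - z) * nu z)) \<partial>lborel)
      \<le> ennreal (G * K_real R * f (norm x))" .
  have "G * K_real R * f (norm x) \<ge> 0" using G0 K_real_bounds[OF R] fx by simp
  then show "integrable lborel (\<lambda>z. indicator S z * (conv_dens nu (Suc n) (x - z) * nu z))"
    "(LINT z|lborel. indicator S z * (conv_dens nu (Suc n) (x - z) * nu z)) \<le> A * B ^ Suc n * C0 * K_real R * f (norm x)"
    using integral_le_of_nn_integral_le[OF _ _ nn] conv_dens_nonneg nu_nonneg unfolding G_def S_def by auto
qed

lemma conv_near_parts_integrable:
  fixes x :: 'a and n :: nat
  assumes R: "R \<ge> R1" and x: "norm x > 2 * R"
  defines "F \<equiv> \<lambda>z. conv_dens nu (Suc n) (x - z) * nu z"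
  shows "integrable lborel (\<lambda>z. indicator (cball 0 R) z * F z)"
    "integrable lborel (\<lambda>z. indicator {z. norm (x - z) \<le> R} z * F z)"
proof -
  let ?S1 = "cball (0::'a) R" and ?S2 = "{z. norm (x - z) \<le> R}"
  have R0: "R > 0" using R R1_ge by simp
  have xR: "norm x - R > R" using x by simp
  have [measurable]: "(\<lambda>z. conv_dens nu (Suc n) (x - z)) \<in> borel_measurable borel" by measurable
  show I1: "integrable lborel (\<lambda>z. indicator ?S1 z * F z)"
  proof (rule Bochner_Integration.integrable_bound)
    show "integrable lborel (\<lambda>z. A * B ^ Suc n * f (norm x - R) * nu z)" using nu_finite by simp
    show "AE z in lborel. norm (indicator ?S1 z * F z) \<le> norm (A * B ^ Suc n * f (norm x - R) * nu z)"
    proof (intro AE_I2)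
      fix z
      show "norm (indicator ?S1 z * F z) \<le> norm (A * B ^ Suc n * f (norm x - R) * nu z)"
      proof (cases "z \<in> ?S1")
        case True
        have d: "norm (x - z) \<ge> norm x - R" using norm_triangle_ineq2[of x z] True by simp
        have "conv_dens nu (Suc n) (x - z) \<le> A * B ^ Suc n * f (norm (x - z))"
          using conv_dens_le[of "x - z" n] d xR R by simp
        also have "\<dots> \<le> A * B ^ Suc n * f (norm x - R)"
          using A_ge B_ge f_mono[OF _ d] xR R0 by (intro mult_left_mono) auto
        finally have "F z \<le> A * B ^ Suc n * f (norm x - R) * nu z"
          unfolding F_def using nu_nonneg[of z] by (intro mult_right_mono)
        moreover have "f (norm x - R) > 0" using xR R0 f_pos by simp
        ultimately show ?thesis
          using True conv_dens_nonneg[of n "x - z"] nu_nonneg[of z] A_ge B_ge unfolding F_def by simp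
      qed (simp add: nu_nonneg)
    qed
  qed (simp add: F_def)
  show I2: "integrable lborel (\<lambda>z. indicator ?S2 z * F z)"
  proof (rule Bochner_Integration.integrable_bound)
    show "integrable lborel (\<lambda>z. C0 * f (norm x - R) * conv_dens nu (Suc n) (x - z))"
      using integrable_reflect_lborel[of "conv_dens nu (Suc n)" x] integrable_conv_dens[of n] by simp
    show "AE z in lborel. norm (indicator ?S2 z * F z) \<le> norm (C0 * f (norm x - R) * conv_dens nu (Suc n) (x - z))"
    proof (intro AE_I2)
      fix z
      show "norm (indicator ?S2 z * F z) \<le> norm (C0 * f (norm x - R) * conv_dens nu (Suc n) (x - z))"
      proof (cases "z \<in> ?S2")
        case True
        have d: "norm z \<ge> norm x - R" using norm_triangle_ineq2[of x "x - z"] True by simp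
        then have "z \<noteq> 0" using xR R0 by auto
        then have "nu z \<le> C0 * f (norm z)" by (rule nu_le)
        also have "\<dots> \<le> C0 * f (norm x - R)" using C0_pos f_mono[OF _ d] xR R0 by (intro mult_left_mono) auto
        finally have "F z \<le> conv_dens nu (Suc n) (x - z) * (C0 * f (norm x - R))"
          unfolding F_def using conv_dens_nonneg[of n "x - z"] by (intro mult_left_mono)
        moreover have "f (norm x - R) > 0" using xR R0 f_pos by simp
        ultimately show ?thesis
          using True conv_dens_nonneg[of n "x - z"] nu_nonneg[of z] C0_pos unfolding F_def
          by (simp add: ac_simps)
      qed (simp add: conv_dens_nonneg)
    qed
  qed (simp add: F_def)
qed

text \<open>For \<open>|x| > 2R\<close> at most one of \<open>z\<close>, \<open>x - z\<close> lies in the ball of radius \<open>R\<close>; this splits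
  the convolution into two near pieces and a remainder.\<close>

lemma conv_dens_Suc_Suc_split:
  assumes R: "R \<ge> R1" and x: "norm x > 2 * R"
  shows "conv_dens nu (Suc (Suc n)) x =
     (LINT z|lborel. indicator (cball 0 R) z * (conv_dens nu (Suc n) (x - z) * nu z)) +
     (LINT w|lborel. indicator (cball 0 R) w * (conv_dens nu (Suc n) w * nu (x - w))) +
     (LINT z|lborel. indicator {z. norm (x - z) > R \<and> norm z > R} z * (conv_dens nu (Suc n) (x - z) * nu z))"
proof -
  define F where "F z = conv_dens nu (Suc n) (x - z) * nu z" for z
  let ?S1 = "cball (0::'a) R" and ?S2 = "{z. norm (x - z) \<le> R}" and ?S3 = "{z. norm (x - z) > R \<and> norm z > R}"
  have [measurable]: "(\<lambda>z. nu (x - z)) \<in> borel_measurable borel" by measurable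
  note I12 = conv_near_parts_integrable[OF R x, of n, folded F_def]
  have I3: "integrable lborel (\<lambda>z. indicator ?S3 z * F z)"
    using conv_remainder_le_K(1)[OF R x] unfolding F_def .
  have split: "F z = indicator ?S1 z * F z + indicator ?S2 z * F z + indicator ?S3 z * F z" for z
  proof -
    have "\<not> (z \<in> ?S1 \<and> z \<in> ?S2)"
      using norm_triangle_ineq[of z "x - z"] x by auto
    then show ?thesis by (auto simp: indicator_def)
  qed
  have "conv_dens nu (Suc (Suc n)) x = (LINT z|lborel. F z)" unfolding F_def by simp
  also have "\<dots> = (LINT z|lborel. indicator ?S1 z * F z + indicator ?S2 z * F z + indicator ?S3 z * F z)"
    using split by simp
  also have "\<dots> = (LINT z|lborel. indicator ?S1 z * F z) + (LINT z|lborel. indicator ?S2 z * F z)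
      + (LINT z|lborel. indicator ?S3 z * F z)"
    using I12 I3 by simp
  also have "(LINT z|lborel. indicator ?S2 z * F z) = (LINT w|lborel. indicator ?S1 w * (conv_dens nu (Suc n) w * nu (x - w)))"
  proof -
    have "(LINT z|lborel. indicator ?S2 z * F z)
        = (LINT z|lborel. (\<lambda>w. indicator ?S1 w * (conv_dens nu (Suc n) w * nu (x - w))) (x - z))"
      unfolding F_def by (intro Bochner_Integration.integral_cong) (auto simp: indicator_def dist_norm norm_minus_commute)
    also have "\<dots> = (LINT w|lborel. indicator ?S1 w * (conv_dens nu (Suc n) w * nu (x - w)))"
      by (rule integral_reflect_lborel) measurable
    finally show ?thesis .
  qed
  finally show ?thesis unfolding F_def .
qed

lemma ray_ratio_bounds:
  assumes "\<rho> \<ge> 0"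
  obtains L S where "L > 0" "S > 0"
    "\<And>s \<theta> u. s \<ge> S \<Longrightarrow> \<theta> \<in> E \<Longrightarrow> norm (u - s *\<^sub>R \<theta>) \<le> \<rho> \<Longrightarrow> nu u / nu (s *\<^sub>R \<theta>) \<le> C0 * L"
    "\<And>n s \<theta> u. s \<ge> S \<Longrightarrow> \<theta> \<in> E \<Longrightarrow> norm (u - s *\<^sub>R \<theta>) \<le> \<rho> \<Longrightarrow>
       conv_dens nu (Suc n) u / nu (s *\<^sub>R \<theta>) \<le> A * B ^ Suc n * L"
proof -
  obtain L S0 where LS: "L > 0" "S0 > \<rho>"
    "\<And>s \<theta> w. s \<ge> S0 \<Longrightarrow> \<theta> \<in> E \<Longrightarrow> norm (w - s *\<^sub>R \<theta>) \<le> \<rho> \<Longrightarrow> f (norm w) \<le> L * nu (s *\<^sub>R \<theta>)"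
    using f_near_ray_le_nu[OF assms] by blast
  define S where "S = max S0 (\<rho> + R1)"
  have far: "norm u \<ge> R1" "nu (s *\<^sub>R \<theta>) > 0" "f (norm u) \<le> L * nu (s *\<^sub>R \<theta>)"
    if s: "s \<ge> S" and th: "\<theta> \<in> E" and u: "norm (u - s *\<^sub>R \<theta>) \<le> \<rho>" for s \<theta> u
  proof -
    have sp: "s > 0" using s R1_ge assms unfolding S_def by auto
    have "s \<le> norm u + norm (u - s *\<^sub>R \<theta>)"
      using norm_triangle_ineq[of u "s *\<^sub>R \<theta> - u"] norm_dir[OF th] sp by (simp add: norm_minus_commute)
    then show "norm u \<ge> R1" using s u unfolding S_def by simp
    show "nu (s *\<^sub>R \<theta>) > 0" using nu_ray_pos[OF th sp] .
    show "f (norm u) \<le> L * nu (s *\<^sub>R \<theta>)" using LS(3)[OF _ th u] s unfolding S_def by simp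
  qed
  show ?thesis
  proof (rule that)
    show "L > 0" using LS(1) .
    show "S > 0" unfolding S_def using R1_ge assms by simp
    fix s \<theta> u assume su: "s \<ge> S" "\<theta> \<in> E" "norm (u - s *\<^sub>R \<theta>) \<le> \<rho>"
    note F = far[OF su]
    have "u \<noteq> 0" using F(1) R1_ge by auto
    then have "nu u \<le> C0 * f (norm u)" by (rule nu_le)
    also have "\<dots> \<le> C0 * (L * nu (s *\<^sub>R \<theta>))" using F(3) C0_pos by (intro mult_left_mono) auto
    finally show "nu u / nu (s *\<^sub>R \<theta>) \<le> C0 * L" using F(2) by (simp add: divide_le_eq algebra_simps)
    fix n
    have "conv_dens nu (Suc n) u \<le> A * B ^ Suc n * f (norm u)" using conv_dens_le[OF F(1)] .
    also have "\<dots> \<le> A * B ^ Suc n * (L * nu (s *\<^sub>R \<theta>))"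
      using F(3) A_ge B_ge by (intro mult_left_mono) auto
    finally show "conv_dens nu (Suc n) u / nu (s *\<^sub>R \<theta>) \<le> A * B ^ Suc n * L"
      using F(2) by (simp add: divide_le_eq algebra_simps)
  qed
qed

definition ratio_limit :: "nat \<Rightarrow> 'a \<Rightarrow> real" where "ratio_limit n \<theta> = real (Suc n) * tilted_mass \<theta> ^ n"

definition near_nu_piece :: "nat \<Rightarrow> real \<Rightarrow> real \<Rightarrow> 'a \<times> 'a \<Rightarrow> real" where
  "near_nu_piece n R s = (\<lambda>(\<theta>, y). LINT z|lborel. indicator (cball 0 R) z *
     (conv_dens nu (Suc n) (s *\<^sub>R \<theta> - (y + z)) / nu (s *\<^sub>R \<theta>) * nu z))"

definition near_conv_piece :: "nat \<Rightarrow> real \<Rightarrow> real \<Rightarrow> 'a \<times> 'a \<Rightarrow> real" where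
  "near_conv_piece n R s = (\<lambda>(\<theta>, y). LINT z|lborel. indicator (cball 0 R) z *
     (nu (s *\<^sub>R \<theta> - (y + z)) / nu (s *\<^sub>R \<theta>) * conv_dens nu (Suc n) z))"

definition near_nu_limit :: "nat \<Rightarrow> real \<Rightarrow> 'a \<times> 'a \<Rightarrow> real" where
  "near_nu_limit n R = (\<lambda>(\<theta>, y). LINT z|lborel. indicator (cball 0 R) z * (ratio_limit n \<theta> * tilt \<theta> (y + z) * nu z))"

definition near_conv_limit :: "nat \<Rightarrow> real \<Rightarrow> 'a \<times> 'a \<Rightarrow> real" where
  "near_conv_limit n R = (\<lambda>(\<theta>, y). LINT z|lborel. indicator (cball 0 R) z * (tilt \<theta> (y + z) * conv_dens nu (Suc n) z))"

lemma near_nu_piece_tendsto: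
  assumes th: "\<theta> \<in> E" and R: "R \<ge> 0"
    and IH: "\<And>u. ((\<lambda>s. conv_dens nu (Suc n) (s *\<^sub>R \<theta> - u) / nu (s *\<^sub>R \<theta>)) \<longlongrightarrow> ratio_limit n \<theta> * tilt \<theta> u) at_top"
  shows "((\<lambda>s. near_nu_piece n R s (\<theta>, y)) \<longlongrightarrow> near_nu_limit n R (\<theta>, y)) at_top"
proof -
  obtain L S where L: "L > 0" and S: "S > 0"
    and nu_bound: "\<And>s \<theta> u. s \<ge> S \<Longrightarrow> \<theta> \<in> E \<Longrightarrow> norm (u - s *\<^sub>R \<theta>) \<le> norm y + R \<Longrightarrow>
      nu u / nu (s *\<^sub>R \<theta>) \<le> C0 * L"
    and conv_bound: "\<And>n s \<theta> u. s \<ge> S \<Longrightarrow> \<theta> \<in> E \<Longrightarrow> norm (u - s *\<^sub>R \<theta>) \<le> norm y + R \<Longrightarrow>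
      conv_dens nu (Suc n) u / nu (s *\<^sub>R \<theta>) \<le> A * B ^ Suc n * L"
    by (rule ray_ratio_bounds[of "norm y + R"]) (use R in auto)
  have "eventually (\<lambda>s. \<forall>z\<in>cball (0::'a) R. \<bar>conv_dens nu (Suc n) (s *\<^sub>R \<theta> - (y + z)) / nu (s *\<^sub>R \<theta>)\<bar> \<le> A * B ^ Suc n * L) at_top"
    unfolding eventually_at_top_linorder
  proof (intro exI[of _ S] allI impI ballI)
    fix s and z :: 'a assume s: "S \<le> s" and z: "z \<in> cball 0 R"
    have "norm (s *\<^sub>R \<theta> - (y + z) - s *\<^sub>R \<theta>) \<le> norm y + R"
      using z norm_triangle_ineq[of y z] by (simp add: norm_minus_commute add.commute)
    moreover have "nu (s *\<^sub>R \<theta>) > 0" using nu_ray_pos[OF th] S s by simp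
    ultimately show "\<bar>conv_dens nu (Suc n) (s *\<^sub>R \<theta> - (y + z)) / nu (s *\<^sub>R \<theta>)\<bar> \<le> A * B ^ Suc n * L"
      using conv_bound[OF s th] conv_dens_nonneg by simp
  qed
  then show ?thesis
    unfolding near_nu_piece_def near_nu_limit_def prod.case
    by (intro tendsto_integral_dominated_on nu_finite IH) auto
qed

lemma near_conv_piece_tendsto:
  assumes th: "\<theta> \<in> E" and R: "R \<ge> 0"
  shows "((\<lambda>s. near_conv_piece n R s (\<theta>, y)) \<longlongrightarrow> near_conv_limit n R (\<theta>, y)) at_top"
proof -
  obtain L S where L: "L > 0" and S: "S > 0"
    and nu_bound: "\<And>s \<theta> u. s \<ge> S \<Longrightarrow> \<theta> \<in> E \<Longrightarrow> norm (u - s *\<^sub>R \<theta>) \<le> norm y + R \<Longrightarrow>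
      nu u / nu (s *\<^sub>R \<theta>) \<le> C0 * L"
    and conv_bound: "\<And>n s \<theta> u. s \<ge> S \<Longrightarrow> \<theta> \<in> E \<Longrightarrow> norm (u - s *\<^sub>R \<theta>) \<le> norm y + R \<Longrightarrow>
      conv_dens nu (Suc n) u / nu (s *\<^sub>R \<theta>) \<le> A * B ^ Suc n * L"
    by (rule ray_ratio_bounds[of "norm y + R"]) (use R in auto)
  have "eventually (\<lambda>s. \<forall>z\<in>cball (0::'a) R. \<bar>nu (s *\<^sub>R \<theta> - (y + z)) / nu (s *\<^sub>R \<theta>)\<bar> \<le> C0 * L) at_top"
    unfolding eventually_at_top_linorder
  proof (intro exI[of _ S] allI impI ballI)
    fix s and z :: 'a assume s: "S \<le> s" and z: "z \<in> cball 0 R"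
    have "norm (s *\<^sub>R \<theta> - (y + z) - s *\<^sub>R \<theta>) \<le> norm y + R"
      using z norm_triangle_ineq[of y z] by (simp add: norm_minus_commute add.commute)
    moreover have "nu (s *\<^sub>R \<theta>) > 0" using nu_ray_pos[OF th] S s by simp
    ultimately show "\<bar>nu (s *\<^sub>R \<theta> - (y + z)) / nu (s *\<^sub>R \<theta>)\<bar> \<le> C0 * L"
      using nu_bound[OF s th] nu_nonneg by simp
  qed
  then show ?thesis
    unfolding near_conv_piece_def near_conv_limit_def prod.case
    by (intro tendsto_integral_dominated_on integrable_conv_dens C_lim th) auto
qed

lemma shift_into_ball:
  assumes "\<rho> > 0" "R \<ge> 0"
  shows "(\<lambda>((\<theta>, y), z). (\<theta>, y + z)) \<in> (E \<times> ball (0::'a) \<rho>) \<times> cball (0::'a) R \<rightarrow> E \<times> ball 0 (\<rho> + R + 1)"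
proof (intro Pi_I)
  fix p assume "p \<in> (E \<times> ball (0::'a) \<rho>) \<times> cball (0::'a) R"
  moreover obtain \<theta> y z where "p = ((\<theta>, y), z)" by (metis prod.collapse)
  ultimately show "(\<lambda>((\<theta>, y), z). (\<theta>, y + z)) p \<in> E \<times> ball 0 (\<rho> + R + 1)"
    using norm_triangle_ineq[of y z] by auto
qed

lemma near_nu_piece_uniform:
  assumes \<rho>: "\<rho> > 0" and R: "R \<ge> 0"
    and IH: "uniform_limit (E \<times> ball 0 (\<rho> + R + 1)) (\<lambda>s (\<theta>, u). conv_dens nu (Suc n) (s *\<^sub>R \<theta> - u) / nu (s *\<^sub>R \<theta>))
      (\<lambda>(\<theta>, u). ratio_limit n \<theta> * tilt \<theta> u) at_top"
  shows "uniform_limit (E \<times> ball 0 \<rho>) (near_nu_piece n R) (near_nu_limit n R) at_top"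
proof -
  have "uniform_limit ((E \<times> ball 0 \<rho>) \<times> cball 0 R)
      (\<lambda>s (i, z). conv_dens nu (Suc n) (s *\<^sub>R fst i - (snd i + z)) / nu (s *\<^sub>R fst i))
      (\<lambda>(i, z). ratio_limit n (fst i) * tilt (fst i) (snd i + z)) at_top"
    using uniform_limit_compose'[OF IH shift_into_ball[OF \<rho> R]] by (simp add: case_prod_beta')
  moreover have "integrable lborel (\<lambda>z. indicator (cball 0 R) z * (ratio_limit n (fst i) * tilt (fst i) (snd i + z) * nu z))"
    if "i \<in> E \<times> ball 0 \<rho>" for i
  proof -
    have "integrable lborel (\<lambda>z. ratio_limit n (fst i) * tilt (fst i) (snd i) * (tilt (fst i) z * nu z))"
      using integrable_tilted_nu that by auto
    then show ?thesis by (intro integrable_indicator_times) (auto simp: tilt_add ac_simps)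
  qed
  ultimately show ?thesis
    using uniform_limit_integral_on[OF _ nu_finite, where S = "cball 0 R" and J = "E \<times> ball 0 \<rho>"
        and F = "\<lambda>s i z. conv_dens nu (Suc n) (s *\<^sub>R fst i - (snd i + z)) / nu (s *\<^sub>R fst i)"
        and G = "\<lambda>i z. ratio_limit n (fst i) * tilt (fst i) (snd i + z)"]
    unfolding near_nu_piece_def near_nu_limit_def by (simp add: case_prod_beta')
qed

lemma near_conv_piece_uniform:
  assumes \<rho>: "\<rho> > 0" and R: "R \<ge> 0"
    and unif: "uniform_limit (E \<times> ball 0 (\<rho> + R + 1)) (\<lambda>r (\<theta>, u). nu (r *\<^sub>R \<theta> - u) / nu (r *\<^sub>R \<theta>))
      (\<lambda>(\<theta>, u). tilt \<theta> u) at_top"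
  shows "uniform_limit (E \<times> ball 0 \<rho>) (near_conv_piece n R) (near_conv_limit n R) at_top"
proof -
  have "uniform_limit ((E \<times> ball 0 \<rho>) \<times> cball 0 R)
      (\<lambda>s (i, z). nu (s *\<^sub>R fst i - (snd i + z)) / nu (s *\<^sub>R fst i))
      (\<lambda>(i, z). tilt (fst i) (snd i + z)) at_top"
    using uniform_limit_compose'[OF unif shift_into_ball[OF \<rho> R]] by (simp add: case_prod_beta')
  moreover have "integrable lborel (\<lambda>z. indicator (cball 0 R) z * (tilt (fst i) (snd i + z) * conv_dens nu (Suc n) z))"
    if "i \<in> E \<times> ball 0 \<rho>" for i
  proof -
    have "integrable lborel (\<lambda>z. tilt (fst i) (snd i) * (conv_dens nu (Suc n) z * tilt (fst i) z))"
      using conv_dens_tilted(1) that by auto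
    then show ?thesis by (intro integrable_indicator_times) (auto simp: tilt_add ac_simps)
  qed
  ultimately show ?thesis
    using uniform_limit_integral_on[OF _ integrable_conv_dens, where S = "cball 0 R" and J = "E \<times> ball 0 \<rho>"
        and F = "\<lambda>s i z. nu (s *\<^sub>R fst i - (snd i + z)) / nu (s *\<^sub>R fst i)"
        and G = "\<lambda>i z. tilt (fst i) (snd i + z)"]
    unfolding near_conv_piece_def near_conv_limit_def by (simp add: case_prod_beta')
qed

lemma near_limits_defect:
  fixes y :: 'a and n :: nat
  assumes th: "\<theta> \<in> E" and R: "R \<ge> R1"
  defines "D \<equiv> ratio_limit (Suc n) \<theta> * tilt \<theta> y - near_nu_limit n R (\<theta>, y) - near_conv_limit n R (\<theta>, y)"
  shows "0 \<le> D"
    "D \<le> tilt \<theta> y * ((real (Suc n) * tilted_mass_bound ^ n * (C0 * (C0 / cone_const))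
        + A * B ^ Suc n * (C0 / cone_const)) * K_real R)"
proof -
  define M where "M = tilted_mass \<theta>"
  define T1 where "T1 = (LINT w|lborel. indicator {w. norm w > R} w * (nu w * tilt \<theta> w))"
  define T2 where "T2 = (LINT w|lborel. indicator {w. norm w > R} w * (conv_dens nu (Suc n) w * tilt \<theta> w))"
  have M: "0 \<le> M" "M \<le> tilted_mass_bound" unfolding M_def using tilted_mass_bounds[OF th] by auto
  have T1: "0 \<le> T1" "T1 \<le> C0 * (C0 / cone_const) * K_real R"
    unfolding T1_def using tail_tilted_nu_le_K[OF th R] nu_nonneg
    by (auto intro!: integral_nonneg_AE)
  have T2: "0 \<le> T2" "T2 \<le> A * B ^ Suc n * (C0 / cone_const) * K_real R"
    unfolding T2_def using tail_tilted_conv_dens_le_K[OF th R] conv_dens_nonneg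
    by (auto intro!: integral_nonneg_AE)
  have "near_nu_limit n R (\<theta>, y)
      = ratio_limit n \<theta> * tilt \<theta> y * (LINT z|lborel. indicator (cball 0 R) z * (nu z * tilt \<theta> z))"
  proof -
    have "(\<lambda>z. indicator (cball 0 R) z * (ratio_limit n \<theta> * tilt \<theta> (y + z) * nu z))
        = (\<lambda>z. ratio_limit n \<theta> * tilt \<theta> y * (indicator (cball 0 R) z * (nu z * tilt \<theta> z)))"
      by (simp add: tilt_add fun_eq_iff ac_simps)
    then show ?thesis unfolding near_nu_limit_def by simp
  qed
  also have "\<dots> = ratio_limit n \<theta> * tilt \<theta> y * (M - T1)"
    using integral_split_cball[of "\<lambda>z. nu z * tilt \<theta> z" R] integrable_tilted_nu[OF th]
    unfolding M_def T1_def tilted_mass_def by (simp add: mult.commute)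
  finally have P: "near_nu_limit n R (\<theta>, y) = ratio_limit n \<theta> * tilt \<theta> y * (M - T1)" .
  have "near_conv_limit n R (\<theta>, y)
      = tilt \<theta> y * (LINT z|lborel. indicator (cball 0 R) z * (conv_dens nu (Suc n) z * tilt \<theta> z))"
  proof -
    have "(\<lambda>z. indicator (cball 0 R) z * (tilt \<theta> (y + z) * conv_dens nu (Suc n) z))
        = (\<lambda>z. tilt \<theta> y * (indicator (cball 0 R) z * (conv_dens nu (Suc n) z * tilt \<theta> z)))"
      by (simp add: tilt_add fun_eq_iff ac_simps)
    then show ?thesis unfolding near_conv_limit_def by simp
  qed
  also have "\<dots> = tilt \<theta> y * (M ^ Suc n - T2)"
    using integral_split_cball[OF conv_dens_tilted(1)[OF th, of n], of R] conv_dens_tilted(2)[OF th, of n]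
    unfolding M_def T2_def by simp
  finally have Q: "near_conv_limit n R (\<theta>, y) = tilt \<theta> y * (M ^ Suc n - T2)" .
  have D: "D = tilt \<theta> y * (real (Suc n) * M ^ n * T1 + T2)"
    unfolding D_def P Q ratio_limit_def M_def[symmetric] by (simp add: algebra_simps)
  show "0 \<le> D" unfolding D using M T1 T2 by simp
  have "real (Suc n) * M ^ n * T1 \<le> real (Suc n) * tilted_mass_bound ^ n * (C0 * (C0 / cone_const) * K_real R)"
    using M T1 by (intro mult_mono power_mono) auto
  then show "D \<le> tilt \<theta> y * ((real (Suc n) * tilted_mass_bound ^ n * (C0 * (C0 / cone_const))
        + A * B ^ Suc n * (C0 / cone_const)) * K_real R)"
    unfolding D using T2 by (intro mult_left_mono) (auto simp: algebra_simps)
qed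

lemma conv_ratio_remainder:
  fixes y :: 'a and n :: nat
  assumes th: "\<theta> \<in> E" and R: "R \<ge> R1" and s: "s > 0"
    and x: "norm (s *\<^sub>R \<theta> - y) > 2 * R" and fx: "f (norm (s *\<^sub>R \<theta> - y)) \<le> L * nu (s *\<^sub>R \<theta>)"
  defines "D \<equiv> conv_dens nu (Suc (Suc n)) (s *\<^sub>R \<theta> - y) / nu (s *\<^sub>R \<theta>)
      - near_nu_piece n R s (\<theta>, y) - near_conv_piece n R s (\<theta>, y)"
  shows "0 \<le> D" "D \<le> A * B ^ Suc n * C0 * K_real R * L"
proof -
  define x where "x = s *\<^sub>R \<theta> - y"
  define Rem where "Rem = (LINT z|lborel. indicator {z. norm (x - z) > R \<and> norm z > R} z * (conv_dens nu (Suc n) (x - z) * nu z))"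
  have nup: "nu (s *\<^sub>R \<theta>) > 0" using nu_ray_pos[OF th s] .
  have "near_nu_piece n R s (\<theta>, y) = (LINT z|lborel. indicator (cball 0 R) z * (conv_dens nu (Suc n) (x - z) * nu z)) / nu (s *\<^sub>R \<theta>)"
    unfolding near_nu_piece_def x_def by (simp add: diff_diff_eq)
  moreover have "near_conv_piece n R s (\<theta>, y) = (LINT w|lborel. indicator (cball 0 R) w * (conv_dens nu (Suc n) w * nu (x - w))) / nu (s *\<^sub>R \<theta>)"
    unfolding near_conv_piece_def x_def by (simp add: diff_diff_eq ac_simps)
  ultimately have D: "D = Rem / nu (s *\<^sub>R \<theta>)"
    using conv_dens_Suc_Suc_split[OF R x[folded x_def], of n] unfolding D_def Rem_def x_def[symmetric]
    by (simp add: add_divide_distrib)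
  show "0 \<le> D" unfolding D Rem_def using nup conv_dens_nonneg nu_nonneg by (simp add: integral_nonneg_AE)
  have "A * B ^ Suc n * C0 * K_real R \<ge> 0" using K_real_bounds[OF R] A_ge B_ge C0_pos by simp
  then have "A * B ^ Suc n * C0 * K_real R * f (norm x) \<le> A * B ^ Suc n * C0 * K_real R * (L * nu (s *\<^sub>R \<theta>))"
    by (rule mult_left_mono[OF fx[folded x_def]])
  then have "Rem \<le> A * B ^ Suc n * C0 * K_real R * (L * nu (s *\<^sub>R \<theta>))"
    using conv_remainder_le_K(2)[OF R x[folded x_def], of n] unfolding Rem_def by linarith
  then show "D \<le> A * B ^ Suc n * C0 * K_real R * L" unfolding D using nup by (simp add: divide_le_eq)
qed

lemma conv_ratio_remainder_eventually:
  assumes J: "J \<subseteq> E \<times> cball 0 \<rho>" and R: "R \<ge> R1"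
    and ray: "\<And>s \<theta> w. s \<ge> S \<Longrightarrow> \<theta> \<in> E \<Longrightarrow> norm (w - s *\<^sub>R \<theta>) \<le> \<rho> \<Longrightarrow> f (norm w) \<le> L * nu (s *\<^sub>R \<theta>)"
  shows "eventually (\<lambda>s. \<forall>i\<in>J. \<bar>(\<lambda>s (\<theta>, y). conv_dens nu (Suc (Suc n)) (s *\<^sub>R \<theta> - y) / nu (s *\<^sub>R \<theta>)) s i
    - near_nu_piece n R s i - near_conv_piece n R s i\<bar> \<le> A * B ^ Suc n * C0 * L * K_real R) at_top"
  unfolding eventually_at_top_linorder
proof (intro exI[of _ "max S (2 * R + \<rho> + 1)"] allI impI ballI)
  fix s i assume s: "max S (2 * R + \<rho> + 1) \<le> s" and i: "i \<in> J"
  obtain \<theta> y where i': "i = (\<theta>, y)" by force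
  have th: "\<theta> \<in> E" and y: "norm y \<le> \<rho>" using i J i' by auto
  have sp: "s > 0" using s R R1_ge y norm_ge_zero[of y] by linarith
  have "norm (s *\<^sub>R \<theta>) = s" using norm_dir[OF th] sp by simp
  then have x: "norm (s *\<^sub>R \<theta> - y) > 2 * R"
    using norm_triangle_ineq2[of "s *\<^sub>R \<theta>" y] s y by simp
  have fx: "f (norm (s *\<^sub>R \<theta> - y)) \<le> L * nu (s *\<^sub>R \<theta>)" using ray[of s \<theta>] s th y by simp
  have "A * B ^ Suc n * C0 * K_real R * L = A * B ^ Suc n * C0 * L * K_real R" by simp
  then show "\<bar>(\<lambda>s (\<theta>, y). conv_dens nu (Suc (Suc n)) (s *\<^sub>R \<theta> - y) / nu (s *\<^sub>R \<theta>)) s i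
      - near_nu_piece n R s i - near_conv_piece n R s i\<bar> \<le> A * B ^ Suc n * C0 * L * K_real R"
    using conv_ratio_remainder[OF th R sp x fx, of n] unfolding i' prod.case abs_le_iff by linarith
qed

text \<open>Induction step for the ratio asymptotics: the two near pieces converge by hypothesis, and the
  remainder and the tails of the limit are both \<open>O(K(R))\<close>, which is small for large \<open>R\<close>.\<close>

lemma conv_ratio_step:
  assumes J: "J \<subseteq> E \<times> cball 0 \<rho>" and \<rho>: "\<rho> \<ge> 0"
    and pieces: "\<And>R. R \<ge> R1 \<Longrightarrow> uniform_limit J (near_nu_piece n R) (near_nu_limit n R) at_top
      \<and> uniform_limit J (near_conv_piece n R) (near_conv_limit n R) at_top"
  shows "uniform_limit J (\<lambda>s (\<theta>, y). conv_dens nu (Suc (Suc n)) (s *\<^sub>R \<theta> - y) / nu (s *\<^sub>R \<theta>))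
    (\<lambda>(\<theta>, y). ratio_limit (Suc n) \<theta> * tilt \<theta> y) at_top"
proof (rule uniform_limit_by_approximation)
  fix \<epsilon> :: real assume \<epsilon>: "\<epsilon> > 0"
  obtain L S where LS: "L > 0" "S > \<rho>"
    "\<And>s \<theta> w. s \<ge> S \<Longrightarrow> \<theta> \<in> E \<Longrightarrow> norm (w - s *\<^sub>R \<theta>) \<le> \<rho> \<Longrightarrow> f (norm w) \<le> L * nu (s *\<^sub>R \<theta>)"
    using f_near_ray_le_nu[OF \<rho>] by blast
  define C1 where "C1 = A * B ^ Suc n * C0 * L"
  define C2 where "C2 = exp (\<kappa> * \<rho>) * (real (Suc n) * tilted_mass_bound ^ n * (C0 * (C0 / cone_const))
      + A * B ^ Suc n * (C0 / cone_const))"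
  have C: "C1 \<ge> 0" "C2 \<ge> 0"
    unfolding C1_def C2_def using A_ge B_ge C0_pos LS(1) cone_const_pos tilted_mass_bound_nonneg by simp_all
  have "eventually (\<lambda>R. K_real R < \<epsilon> / (C1 + C2 + 1)) at_top"
    using K_real_tendsto by (rule order_tendstoD) (use \<epsilon> C in simp)
  then obtain R where R: "R \<ge> R1" "K_real R < \<epsilon> / (C1 + C2 + 1)"
    by (metis eventually_at_top_linorder max.cobounded1 max.cobounded2)
  have KR: "C1 * K_real R \<le> \<epsilon>" "C2 * K_real R \<le> \<epsilon>"
  proof -
    have "(C1 + C2 + 1) * K_real R \<le> \<epsilon>" using R(2) C by (simp add: field_simps less_imp_le)
    moreover have "C1 * K_real R \<ge> 0" "C2 * K_real R \<ge> 0" using C K_real_bounds(2)[OF R(1)] by simp_all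
    ultimately show "C1 * K_real R \<le> \<epsilon>" "C2 * K_real R \<le> \<epsilon>"
      using K_real_bounds(2)[OF R(1)] by (simp_all add: algebra_simps)
  qed
  show "\<exists>P Pl Q Ql. uniform_limit J P Pl at_top \<and> uniform_limit J Q Ql at_top \<and>
     eventually (\<lambda>s. \<forall>i\<in>J. \<bar>(\<lambda>s (\<theta>, y). conv_dens nu (Suc (Suc n)) (s *\<^sub>R \<theta> - y) / nu (s *\<^sub>R \<theta>)) s i
       - P s i - Q s i\<bar> \<le> \<epsilon>) at_top \<and>
     (\<forall>i\<in>J. \<bar>(\<lambda>(\<theta>, y). ratio_limit (Suc n) \<theta> * tilt \<theta> y) i - Pl i - Ql i\<bar> \<le> \<epsilon>)"
  proof (intro exI conjI)
    show "uniform_limit J (near_nu_piece n R) (near_nu_limit n R) at_top"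
      "uniform_limit J (near_conv_piece n R) (near_conv_limit n R) at_top"
      using pieces[OF R(1)] by auto
    have "eventually (\<lambda>s. \<forall>i\<in>J. \<bar>(\<lambda>s (\<theta>, y). conv_dens nu (Suc (Suc n)) (s *\<^sub>R \<theta> - y) / nu (s *\<^sub>R \<theta>)) s i
       - near_nu_piece n R s i - near_conv_piece n R s i\<bar> \<le> C1 * K_real R) at_top"
      unfolding C1_def by (rule conv_ratio_remainder_eventually[OF J R(1)]) (rule LS(3))
    then show "eventually (\<lambda>s. \<forall>i\<in>J. \<bar>(\<lambda>s (\<theta>, y). conv_dens nu (Suc (Suc n)) (s *\<^sub>R \<theta> - y) / nu (s *\<^sub>R \<theta>)) s i
       - near_nu_piece n R s i - near_conv_piece n R s i\<bar> \<le> \<epsilon>) at_top"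
      by (rule eventually_mono) (use KR(1) in \<open>blast intro: order_trans\<close>)
    show "\<forall>i\<in>J. \<bar>(\<lambda>(\<theta>, y). ratio_limit (Suc n) \<theta> * tilt \<theta> y) i - near_nu_limit n R i - near_conv_limit n R i\<bar> \<le> \<epsilon>"
    proof
      fix i assume i: "i \<in> J"
      obtain \<theta> y where i': "i = (\<theta>, y)" by force
      have th: "\<theta> \<in> E" and y: "norm y \<le> \<rho>" using i J i' by auto
      note D = near_limits_defect[OF th R(1), of n y]
      have "tilt \<theta> y * ((real (Suc n) * tilted_mass_bound ^ n * (C0 * (C0 / cone_const))
          + A * B ^ Suc n * (C0 / cone_const)) * K_real R) \<le> C2 * K_real R"
        unfolding C2_def using tilt_le[OF th y] A_ge B_ge C0_pos cone_const_pos tilted_mass_bound_nonneg K_real_bounds(2)[OF R(1)]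
        by (simp add: mult.assoc mult_right_mono)
      then show "\<bar>(\<lambda>(\<theta>, y). ratio_limit (Suc n) \<theta> * tilt \<theta> y) i - near_nu_limit n R i - near_conv_limit n R i\<bar> \<le> \<epsilon>"
        using D KR(2) unfolding i' by simp
    qed
  qed
qed

lemma conv_ratio_tendsto:
  assumes th: "\<theta> \<in> E"
  shows "((\<lambda>s. conv_dens nu (Suc n) (s *\<^sub>R \<theta> - u) / nu (s *\<^sub>R \<theta>)) \<longlongrightarrow> ratio_limit n \<theta> * tilt \<theta> u) at_top"
proof (induction n arbitrary: u)
  case 0
  then show ?case using C_lim[OF th, of u] by (simp add: ratio_limit_def)
next
  case (Suc n)
  have "uniform_limit {(\<theta>, u)} (\<lambda>s (\<theta>, y). conv_dens nu (Suc (Suc n)) (s *\<^sub>R \<theta> - y) / nu (s *\<^sub>R \<theta>))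
      (\<lambda>(\<theta>, y). ratio_limit (Suc n) \<theta> * tilt \<theta> y) at_top"
  proof (rule conv_ratio_step[where \<rho> = "norm u"])
    fix R assume "R \<ge> R1"
    then have "R \<ge> 0" using R1_ge by simp
    then show "uniform_limit {(\<theta>, u)} (near_nu_piece n R) (near_nu_limit n R) at_top
      \<and> uniform_limit {(\<theta>, u)} (near_conv_piece n R) (near_conv_limit n R) at_top"
      using near_nu_piece_tendsto[OF th _ Suc.IH] near_conv_piece_tendsto[OF th] by simp
  qed (use th in auto)
  then show ?case by simp
qed

lemma conv_ratio_uniform:
  assumes unif: "\<And>D. compact D \<Longrightarrow> uniform_limit (E \<times> D) (\<lambda>r (\<theta>, y). nu (r *\<^sub>R \<theta> - y) / nu (r *\<^sub>R \<theta>))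
      (\<lambda>(\<theta>, y). tilt \<theta> y) at_top"
    and \<rho>: "\<rho> > 0"
  shows "uniform_limit (E \<times> ball 0 \<rho>) (\<lambda>s (\<theta>, u). conv_dens nu (Suc n) (s *\<^sub>R \<theta> - u) / nu (s *\<^sub>R \<theta>))
    (\<lambda>(\<theta>, u). ratio_limit n \<theta> * tilt \<theta> u) at_top"
  using \<rho>
proof (induction n arbitrary: \<rho>)
  case 0
  have "uniform_limit (E \<times> ball 0 \<rho>) (\<lambda>r (\<theta>, y). nu (r *\<^sub>R \<theta> - y) / nu (r *\<^sub>R \<theta>)) (\<lambda>(\<theta>, y). tilt \<theta> y) at_top"
    by (rule uniform_limit_on_subset[OF unif[of "cball 0 \<rho>"]]) auto
  then show ?case by (simp add: ratio_limit_def)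
next
  case (Suc n)
  show ?case
  proof (rule conv_ratio_step[where \<rho> = \<rho>])
    fix R assume "R \<ge> R1"
    then have R: "R \<ge> 0" using R1_ge by simp
    have "uniform_limit (E \<times> ball 0 (\<rho> + R + 1)) (\<lambda>r (\<theta>, u). nu (r *\<^sub>R \<theta> - u) / nu (r *\<^sub>R \<theta>)) (\<lambda>(\<theta>, u). tilt \<theta> u) at_top"
      by (rule uniform_limit_on_subset[OF unif[of "cball 0 (\<rho> + R + 1)"]]) auto
    then show "uniform_limit (E \<times> ball 0 \<rho>) (near_nu_piece n R) (near_nu_limit n R) at_top
      \<and> uniform_limit (E \<times> ball 0 \<rho>) (near_conv_piece n R) (near_conv_limit n R) at_top"
      using near_nu_piece_uniform[OF Suc.prems R Suc.IH] near_conv_piece_uniform[OF Suc.prems R] Suc.prems R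
      by simp
  qed (use Suc.prems in auto)
qed

lemma integral_tilt_minus_one:
  assumes "\<theta> \<in> E"
  shows "(LINT z|lborel. (exp (\<kappa> * (\<theta> \<bullet> z)) - 1) * nu z) = tilted_mass \<theta> - mass"
proof -
  have "(LINT z|lborel. (exp (\<kappa> * (\<theta> \<bullet> z)) - 1) * nu z) = (LINT z|lborel. tilt \<theta> z * nu z - nu z)"
    by (simp add: left_diff_distrib)
  also have "\<dots> = tilted_mass \<theta> - mass" unfolding tilted_mass_def total_mass_def
    using integrable_tilted_nu[OF assms] nu_finite by (rule Bochner_Integration.integral_diff)
  finally show ?thesis .
qed

lemma ratio_limit_series:
  assumes "\<theta> \<in> E"
  shows "exp (- t * mass) * (\<Sum>n. t ^ n / fact (Suc n) * (ratio_limit n \<theta> * tilt \<theta> y))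
    = exp (\<kappa> * (\<theta> \<bullet> y)) * exp (t * (LINT z|lborel. (exp (\<kappa> * (\<theta> \<bullet> z)) - 1) * nu z))"
proof -
  have "(\<lambda>n. (t * tilted_mass \<theta>) ^ n / fact n) sums exp (t * tilted_mass \<theta>)"
    using exp_converges[of "t * tilted_mass \<theta>"] by (simp add: divide_inverse mult.commute)
  then have "(\<lambda>n. tilt \<theta> y * ((t * tilted_mass \<theta>) ^ n / fact n)) sums (tilt \<theta> y * exp (t * tilted_mass \<theta>))"
    by (rule sums_mult)
  moreover have "tilt \<theta> y * ((t * tilted_mass \<theta>) ^ n / fact n) = t ^ n / fact (Suc n) * (ratio_limit n \<theta> * tilt \<theta> y)" for n
    unfolding ratio_limit_def by (simp add: power_mult_distrib field_simps del: of_nat_Suc)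
  ultimately have "(\<Sum>n. t ^ n / fact (Suc n) * (ratio_limit n \<theta> * tilt \<theta> y)) = tilt \<theta> y * exp (t * tilted_mass \<theta>)"
    by (simp add: sums_iff)
  then show ?thesis
    unfolding integral_tilt_minus_one[OF assms] by (simp add: mult_exp_exp algebra_simps)
qed

lemma ratio_limit_term_le:
  assumes th: "\<theta> \<in> E" and y: "norm y \<le> \<rho>" and t: "0 < t" "t \<le> t0"
  shows "\<bar>t ^ n / fact (Suc n) * (ratio_limit n \<theta> * tilt \<theta> y)\<bar>
    \<le> t0 ^ n / fact n * (exp (\<kappa> * \<rho>) * tilted_mass_bound ^ n)"
proof -
  have M: "0 \<le> tilted_mass \<theta>" "tilted_mass \<theta> \<le> tilted_mass_bound" using tilted_mass_bounds[OF th] by auto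
  have "\<bar>t ^ n / fact (Suc n) * (ratio_limit n \<theta> * tilt \<theta> y)\<bar> = tilt \<theta> y * ((t * tilted_mass \<theta>) ^ n / fact n)"
    unfolding ratio_limit_def using t M by (simp add: power_mult_distrib field_simps del: of_nat_Suc)
  also have "\<dots> \<le> exp (\<kappa> * \<rho>) * ((t0 * tilted_mass_bound) ^ n / fact n)"
    using tilt_le[OF th y] t M by (intro mult_mono divide_right_mono power_mono) auto
  also have "\<dots> = t0 ^ n / fact n * (exp (\<kappa> * \<rho>) * tilted_mass_bound ^ n)"
    by (simp add: power_mult_distrib)
  finally show ?thesis .
qed

text \<open>Termwise passage to the limit in the series defining \<open>p~\<close> (Tannery's theorem); the sharp bound
  on the convolution powers gives the summable majorant \<open>t0^n / n! * (A L B^(n+1) + e^(\<kappa> \<rho>) M^n)\<close>.\<close>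

lemma ptilde_ratio_uniform:
  assumes I: "I \<subseteq> {0<..t0} \<times> E \<times> cball 0 \<rho>" and t0: "t0 > 0" and \<rho>: "\<rho> \<ge> 0"
    and ratio: "\<And>n. uniform_limit I (\<lambda>s (t, \<theta>, y). conv_dens nu (Suc n) (s *\<^sub>R \<theta> - y) / nu (s *\<^sub>R \<theta>))
      (\<lambda>(t, \<theta>, y). ratio_limit n \<theta> * tilt \<theta> y) at_top"
  shows "uniform_limit I (\<lambda>s (t, \<theta>, y). ptilde nu t (s *\<^sub>R \<theta> - y) / (t * nu (s *\<^sub>R \<theta>)))
     (\<lambda>(t, \<theta>, y). exp (\<kappa> * (\<theta> \<bullet> y)) * exp (t * (LINT z|lborel. (exp (\<kappa> * (\<theta> \<bullet> z)) - 1) * nu z))) at_top"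
proof -
  obtain L S where L: "L > 0" and S: "S > 0"
    and conv_bound: "\<And>n s \<theta> u. s \<ge> S \<Longrightarrow> \<theta> \<in> E \<Longrightarrow> norm (u - s *\<^sub>R \<theta>) \<le> \<rho> \<Longrightarrow>
      conv_dens nu (Suc n) u / nu (s *\<^sub>R \<theta>) \<le> A * B ^ Suc n * L"
    by (rule ray_ratio_bounds[OF \<rho>]) auto
  define c where "c n = (\<lambda>(t::real, \<theta>::'a, y::'a). t ^ n / fact (Suc n))" for n
  define u where "u n s = (\<lambda>(t::real, \<theta>, y). c n (t, \<theta>, y) * (conv_dens nu (Suc n) (s *\<^sub>R \<theta> - y) / nu (s *\<^sub>R \<theta>)))" for n s
  define v where "v n = (\<lambda>(t::real, \<theta>, y). c n (t, \<theta>, y) * (ratio_limit n \<theta> * tilt \<theta> y))" for n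
  define m where "m n = t0 ^ n / fact n * (A * L * B ^ Suc n + exp (\<kappa> * \<rho>) * tilted_mass_bound ^ n)" for n
  have c: "0 \<le> c n i" "c n i \<le> t0 ^ n / fact n" if "i \<in> I" for n i
    using that I exp_coeff_le[of "fst i" t0 n] unfolding c_def by (auto simp: case_prod_beta')
  have m0: "t0 ^ n / fact n \<ge> 0" "A * L * B ^ Suc n \<ge> 0" "exp (\<kappa> * \<rho>) * tilted_mass_bound ^ n \<ge> 0" for n
    using t0 A_ge B_ge L tilted_mass_bound_nonneg by simp_all
  have u_le: "\<bar>u n s i\<bar> \<le> m n" if s: "s \<ge> S" and i: "i \<in> I" for n s i
  proof -
    obtain t \<theta> y where i': "i = (t, \<theta>, y)" by (cases i)
    have th: "\<theta> \<in> E" and y: "norm y \<le> \<rho>" using I i i' by auto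
    have "0 < nu (s *\<^sub>R \<theta>)" using nu_ray_pos[OF th] S s by simp
    then have r: "0 \<le> conv_dens nu (Suc n) (s *\<^sub>R \<theta> - y) / nu (s *\<^sub>R \<theta>)"
      "conv_dens nu (Suc n) (s *\<^sub>R \<theta> - y) / nu (s *\<^sub>R \<theta>) \<le> A * L * B ^ Suc n"
      using conv_dens_nonneg conv_bound[OF s th, of "s *\<^sub>R \<theta> - y" n] y by (simp_all add: ac_simps)
    have "0 \<le> c n i * (conv_dens nu (Suc n) (s *\<^sub>R \<theta> - y) / nu (s *\<^sub>R \<theta>))"
      using c(1)[OF i] r(1) by (rule mult_nonneg_nonneg)
    then have "\<bar>u n s i\<bar> = c n i * (conv_dens nu (Suc n) (s *\<^sub>R \<theta> - y) / nu (s *\<^sub>R \<theta>))"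
      unfolding u_def i' prod.case by (rule abs_of_nonneg)
    also have "\<dots> \<le> t0 ^ n / fact n * (A * L * B ^ Suc n)"
      using c[OF i] r m0 by (intro mult_mono) auto
    also have "\<dots> \<le> m n" unfolding m_def using m0 by (intro mult_left_mono) auto
    finally show ?thesis .
  qed
  have v_le: "\<bar>v n i\<bar> \<le> m n" if i: "i \<in> I" for n i
  proof -
    obtain t \<theta> y where i': "i = (t, \<theta>, y)" by (cases i)
    have "\<bar>v n i\<bar> \<le> t0 ^ n / fact n * (exp (\<kappa> * \<rho>) * tilted_mass_bound ^ n)"
      using ratio_limit_term_le[of \<theta> y \<rho> t t0 n] I i unfolding v_def c_def i' by auto
    also have "\<dots> \<le> m n" unfolding m_def using m0 by (intro mult_left_mono) auto
    finally show ?thesis .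
  qed
  have "uniform_limit I (\<lambda>s i. \<Sum>n. u n s i) (\<lambda>i. \<Sum>n. v n i) at_top"
  proof (rule uniform_limit_suminf_dominated)
    show "uniform_limit I (u n) (v n) at_top" for n
      using uniform_limit_mult_bounded_left[OF ratio[of n], of "c n" "t0 ^ n / fact n"] c
      unfolding u_def v_def by (simp add: case_prod_beta')
    show "summable m" unfolding m_def by (rule summable_exp_majorant)
    show "eventually (\<lambda>s. \<forall>n. \<forall>i\<in>I. \<bar>u n s i\<bar> \<le> m n) at_top"
      unfolding eventually_at_top_linorder using u_le by blast
  qed (rule v_le)
  then have "uniform_limit I (\<lambda>s i. exp (- fst i * mass) * (\<Sum>n. u n s i))
      (\<lambda>i. exp (- fst i * mass) * (\<Sum>n. v n i)) at_top"
    by (rule uniform_limit_mult_bounded_left[where K = 1]) (use I mass_nonneg in auto)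
  moreover have "eventually (\<lambda>s. \<forall>i\<in>I. exp (- fst i * mass) * (\<Sum>n. u n s i)
      = (\<lambda>(t, \<theta>, y). ptilde nu t (s *\<^sub>R \<theta> - y) / (t * nu (s *\<^sub>R \<theta>))) i) at_top"
    unfolding eventually_at_top_linorder
  proof (intro exI[of _ S] allI impI ballI)
    fix s i assume s: "S \<le> s" and i: "i \<in> I"
    obtain t \<theta> y where i': "i = (t, \<theta>, y)" by (cases i)
    have t: "0 < t" and th: "\<theta> \<in> E" using I i i' by auto
    have "summable m" unfolding m_def by (rule summable_exp_majorant)
    then have "summable (\<lambda>n. u n s i)"
      by (rule summable_comparison_test[rotated]) (use u_le s i in auto)
    then show "exp (- fst i * mass) * (\<Sum>n. u n s i) = (\<lambda>(t, \<theta>, y). ptilde nu t (s *\<^sub>R \<theta> - y) / (t * nu (s *\<^sub>R \<theta>))) i"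
      using ptilde_div_eq_series[OF t nu_ray_pos[OF th]] S s unfolding u_def c_def i' by simp
  qed
  moreover have "exp (- fst i * mass) * (\<Sum>n. v n i)
      = (\<lambda>(t, \<theta>, y). exp (\<kappa> * (\<theta> \<bullet> y)) * exp (t * (LINT z|lborel. (exp (\<kappa> * (\<theta> \<bullet> z)) - 1) * nu z))) i"
    if "i \<in> I" for i
    using that I ratio_limit_series unfolding v_def c_def by (auto simp: case_prod_beta')
  ultimately show ?thesis
    by (rule uniform_limit_cong[THEN iffD1, rotated 2]) auto
qed

lemma ptilde_ratio_tendsto:
  assumes t: "t > 0" and th: "\<theta> \<in> E"
  shows "((\<lambda>s. ptilde nu t (s *\<^sub>R \<theta> - y) / (t * nu (s *\<^sub>R \<theta>))) \<longlongrightarrow>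
    exp (\<kappa> * (\<theta> \<bullet> y)) * exp (t * (LINT z|lborel. (exp (\<kappa> * (\<theta> \<bullet> z)) - 1) * nu z))) at_top"
proof -
  have "uniform_limit {(t, \<theta>, y)} (\<lambda>s (t, \<theta>, y). ptilde nu t (s *\<^sub>R \<theta> - y) / (t * nu (s *\<^sub>R \<theta>)))
      (\<lambda>(t, \<theta>, y). exp (\<kappa> * (\<theta> \<bullet> y)) * exp (t * (LINT z|lborel. (exp (\<kappa> * (\<theta> \<bullet> z)) - 1) * nu z))) at_top"
    by (rule ptilde_ratio_uniform[of _ t "norm y"]) (use t th conv_ratio_tendsto[OF th] in auto)
  then show ?thesis by simp
qed

lemma ptilde_ratio_uniform_ball:
  assumes unif: "\<forall>D. compact D \<longrightarrow> uniform_limit (E \<times> D) (\<lambda>r (\<theta>, y). nu (r *\<^sub>R \<theta> - y) / nu (r *\<^sub>R \<theta>))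
      (\<lambda>(\<theta>, y). exp (\<kappa> * (\<theta> \<bullet> y))) at_top"
    and t0: "t0 > 0" and \<rho>: "\<rho> > 0"
  shows "uniform_limit ({0<..t0} \<times> E \<times> ball 0 \<rho>) (\<lambda>s (t, \<theta>, y). ptilde nu t (s *\<^sub>R \<theta> - y) / (t * nu (s *\<^sub>R \<theta>)))
    (\<lambda>(t, \<theta>, y). exp (\<kappa> * (\<theta> \<bullet> y)) * exp (t * (LINT z|lborel. (exp (\<kappa> * (\<theta> \<bullet> z)) - 1) * nu z))) at_top"
proof (rule ptilde_ratio_uniform[where \<rho> = \<rho>])
  fix n
  show "uniform_limit ({0<..t0} \<times> E \<times> ball 0 \<rho>) (\<lambda>s (t, \<theta>, y). conv_dens nu (Suc n) (s *\<^sub>R \<theta> - y) / nu (s *\<^sub>R \<theta>))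
      (\<lambda>(t, \<theta>, y). ratio_limit n \<theta> * tilt \<theta> y) at_top"
    using uniform_limit_compose'[OF conv_ratio_uniform[OF _ \<rho>, of n], of snd "{0<..t0} \<times> E \<times> ball 0 \<rho>"] unif
    by (auto simp: case_prod_beta' Pi_def)
qed (use t0 \<rho> in auto)

end

theorem lemma7:
  fixes nu :: "'a::euclidean_space \<Rightarrow> real"
    and f :: "real \<Rightarrow> real"
    and E :: "'a set" and \<kappa> C0 t0 :: real
  assumes nu_meas: "nu \<in> borel_measurable lborel"
    and nu_nonneg: "\<And>x. nu x \<ge> 0"
    and nu_finite: "integrable lborel nu"
    \<comment> \<open>condition (B)\<close>
    and f_pos: "\<And>r. r > 0 \<Longrightarrow> f r > 0"
    and f_mono: "\<And>r s. 0 < r \<Longrightarrow> r \<le> s \<Longrightarrow> f s \<le> f r"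
    and C0_pos: "C0 > 0"
    and nu_le: "\<And>x. x \<noteq> 0 \<Longrightarrow> nu x \<le> C0 * f (norm x)"
    and liminf_pos: "Liminf (at_right 0)
          (\<lambda>r. ereal ((set_lebesgue_integral lborel {x. norm x > r} nu) / (f r * r ^ DIM('a)))) > 0"
    and K_mono: "\<And>r s. 0 < r \<Longrightarrow> r \<le> s \<Longrightarrow> K_fun TYPE('a) f s \<le> K_fun TYPE('a) f r"
    and K_lim: "(K_fun TYPE('a) f \<longlongrightarrow> 0) at_top"
    \<comment> \<open>condition (C)\<close>
    and E_sphere: "E \<subseteq> sphere 0 1"
    and \<kappa>_nonneg: "\<kappa> \<ge> 0"
    and C_lim: "\<And>\<theta> y. \<theta> \<in> E \<Longrightarrow>
          ((\<lambda>r. nu (r *\<^sub>R \<theta> - y) / nu (r *\<^sub>R \<theta>)) \<longlongrightarrow> exp (\<kappa> * (\<theta> \<bullet> y))) at_top"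
    and C_inf: "\<exists>c>0. \<forall>x\<in>Gamma_cone E. nu x / f (norm x) \<ge> c"
    and t0_pos: "t0 > 0"
  shows "(\<forall>t\<in>{0<..t0}. \<forall>\<theta>\<in>E. \<forall>y.
           ((\<lambda>s. ptilde nu t (s *\<^sub>R \<theta> - y) / (t * nu (s *\<^sub>R \<theta>)))
             \<longlongrightarrow> exp (\<kappa> * (\<theta> \<bullet> y)) *
                 exp (t * (LINT z|lborel. (exp (\<kappa> * (\<theta> \<bullet> z)) - 1) * nu z))) at_top)
       \<and> ((\<forall>D. compact D \<longrightarrow>
             uniform_limit (E \<times> D)
               (\<lambda>r (\<theta>, y). nu (r *\<^sub>R \<theta> - y) / nu (r *\<^sub>R \<theta>))
               (\<lambda>(\<theta>, y). exp (\<kappa> * (\<theta> \<bullet> y))) at_top)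
           \<longrightarrow> (\<forall>\<rho>>0.
             uniform_limit ({0<..t0} \<times> E \<times> ball 0 \<rho>)
               (\<lambda>s (t, \<theta>, y). ptilde nu t (s *\<^sub>R \<theta> - y) / (t * nu (s *\<^sub>R \<theta>)))
               (\<lambda>(t, \<theta>, y). exp (\<kappa> * (\<theta> \<bullet> y)) *
                  exp (t * (LINT z|lborel. (exp (\<kappa> * (\<theta> \<bullet> z)) - 1) * nu z)))
               at_top))"
proof (cases "E = {}")
  case False
  interpret levy_conditions nu f C0 E \<kappa>
    by unfold_locales (use assms False in auto)
  obtain R1 A B where "R1 \<ge> 1" "A \<ge> 1" "B \<ge> 1" "K_fun TYPE('a) f R1 < 1"
    "\<And>n w. R1 \<le> norm w \<Longrightarrow> conv_dens nu (Suc n) w \<le> A * B ^ Suc n * f (norm w)"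
    using conv_dens_le_f by blast
  then interpret sharp_bound nu f C0 E \<kappa> R1 A B
    by unfold_locales auto
  show ?thesis using ptilde_ratio_tendsto ptilde_ratio_uniform_ball t0_pos by auto
qed simp

end
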